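(* For $N\ge1$, \[Z_N(\{u\}_N|\{w\}_N)=\frac{\prod_{j=1}^N(1-t)cu_j\prod_{j,k=1}^N(au_j+bw_k)(eu_j+fw_k)}{(cd)^{N(N-1)/2}\prod_{1\le j<k\le N}(u_j-u_k)(w_k-w_j)}\det_{1\le j,k\le N}\Big(\frac{1}{(au_j+bw_k)(eu_j+fw_k)}\Big)\] as rational functions of $u_1,\dots,u_N,w_1,\dots,w_N$.
   Context: Fix complex parameters $t,a,b,c,d,e,f$, all nonzero, with $t\neq1$, satisfying $cd+af=0$ and $tcd+be=0$. The inhomogeneous $L$-operator $L_{aj}(u,w)$ on $W_a\otimes V_j$ ($\cong\mathbb{C}^2\otimes\mathbb{C}^2$, basis $|0\rangle,|1\rangle$) has matrix elements ${}_a\langle\gamma|{}_j\langle\delta|L_{aj}(u,w)|\alpha\rangle_a|\beta\rangle_j=[L(u,w)]^{\gamma\delta}_{\alpha\beta}$: $[L]^{00}_{00}=au+bw$, $[L]^{01}_{01}=atu+bw$, $[L]^{01}_{10}=(1-t)cu$, $[L]^{10}_{01}=(1-t)dw$, $[L]^{10}_{10}=eu+fw$, $[L]^{11}_{11}=eu+tfw$, all others $0$. Define $B_N(u|\{w\}_N)={}_a\langle0|L_{aN}(u,w_N)\cdots L_{a1}(u,w_1)|1\rangle_a$ on $V_1\otimes\cdots\otimes V_N$ and $Z_N(\{u\}_N|\{w\}_N)=\langle1\cdots N|B_N(u_1|\{w\}_N)\cdots B_N(u_N|\{w\}_N)|\Omega\rangle$ with $|\Omega\rangle=|0\rangle^{\otimes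 N}$, $\langle1\cdots N|=\langle1|^{\otimes N}$. *)

theory Defs
  imports "Jordan_Normal_Form.Determinant" "HOL-Library.FuncSet" Complex_Main
begin

text \<open>Matrix elements [L(u,w)]^{gamma delta}_{alpha beta} of the inhomogeneous L-operator.
  gamma: outgoing auxiliary state, delta: outgoing quantum state,
  alpha: incoming auxiliary state, beta: incoming quantum state.\<close>
definition Lel :: "complex \<Rightarrow> complex \<Rightarrow> complex \<Rightarrow> complex \<Rightarrow> complex \<Rightarrow> complex \<Rightarrow> complex
    \<Rightarrow> complex \<Rightarrow> complex \<Rightarrow> nat \<Rightarrow> nat \<Rightarrow> nat \<Rightarrow> nat \<Rightarrow> complex" where
  "Lel t a b c d e f u w \<gamma> \<delta> \<alpha> \<beta> =
    (if (\<gamma>,\<delta>,\<alpha>,\<beta>) = (0,0,0,0) then a*u + b*w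
     else if (\<gamma>,\<delta>,\<alpha>,\<beta>) = (0,1,0,1) then a*t*u + b*w
     else if (\<gamma>,\<delta>,\<alpha>,\<beta>) = (0,1,1,0) then (1-t)*c*u
     else if (\<gamma>,\<delta>,\<alpha>,\<beta>) = (1,0,0,1) then (1-t)*d*w
     else if (\<gamma>,\<delta>,\<alpha>,\<beta>) = (1,0,1,0) then e*u + f*w
     else if (\<gamma>,\<delta>,\<alpha>,\<beta>) = (1,1,1,1) then e*u + t*f*w
     else 0)"

text \<open>Bpart ... u w k alpha delta beta: matrix element
  <alpha|_a <delta_k..delta_1| L_{ak}(u,w_k) ... L_{a1}(u,w_1) |1>_a |beta_k..beta_1>
  (configurations are functions on sites 1..k with values in {0,1}).\<close>
fun Bpart :: "complex \<Rightarrow> complex \<Rightarrow> complex \<Rightarrow> complex \<Rightarrow> complex \<Rightarrow> complex \<Rightarrow> complex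
    \<Rightarrow> complex \<Rightarrow> (nat \<Rightarrow> complex) \<Rightarrow> nat \<Rightarrow> nat \<Rightarrow> (nat \<Rightarrow> nat) \<Rightarrow> (nat \<Rightarrow> nat) \<Rightarrow> complex" where
  "Bpart t a b c d e f u w 0 \<alpha> \<delta> \<beta> = (if \<alpha> = 1 then 1 else 0)"
| "Bpart t a b c d e f u w (Suc k) \<alpha>' \<delta> \<beta> =
     (\<Sum>\<alpha>\<in>{0,1}. Lel t a b c d e f u (w (Suc k)) \<alpha>' (\<delta> (Suc k)) \<alpha> (\<beta> (Suc k))
                  * Bpart t a b c d e f u w k \<alpha> \<delta> \<beta>)"

text \<open>Basis configurations of V_1 \<otimes> ... \<otimes> V_N.\<close>
definition configs :: "nat \<Rightarrow> (nat \<Rightarrow> nat) set" where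
  "configs N = {1..N} \<rightarrow>\<^sub>E {0,1}"

text \<open>Matrix element <delta| B_N(u|{w}_N) |beta>.\<close>
definition Bel :: "complex \<Rightarrow> complex \<Rightarrow> complex \<Rightarrow> complex \<Rightarrow> complex \<Rightarrow> complex \<Rightarrow> complex
    \<Rightarrow> nat \<Rightarrow> complex \<Rightarrow> (nat \<Rightarrow> complex) \<Rightarrow> (nat \<Rightarrow> nat) \<Rightarrow> (nat \<Rightarrow> nat) \<Rightarrow> complex" where
  "Bel t a b c d e f N u w \<delta> \<beta> = Bpart t a b c d e f u w N 0 \<delta> \<beta>"

definition Bop :: "complex \<Rightarrow> complex \<Rightarrow> complex \<Rightarrow> complex \<Rightarrow> complex \<Rightarrow> complex \<Rightarrow> complex
    \<Rightarrow> nat \<Rightarrow> complex \<Rightarrow> (nat \<Rightarrow> complex) \<Rightarrow> ((nat \<Rightarrow> nat) \<Rightarrow> complex) \<Rightarrow> ((nat \<Rightarrow> nat) \<Rightarrow> complex)" where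
  "Bop t a b c d e f N u w \<psi> = (\<lambda>\<delta>. \<Sum>\<beta>\<in>configs N. Bel t a b c d e f N u w \<delta> \<beta> * \<psi> \<beta>)"

definition Omega :: "nat \<Rightarrow> (nat \<Rightarrow> nat) \<Rightarrow> complex" where
  "Omega N = (\<lambda>\<beta>. if \<forall>i\<in>{1..N}. \<beta> i = 0 then 1 else 0)"

text \<open>Z_N = <1...N| B_N(u_1) ... B_N(u_N) |Omega>.\<close>
definition Zpf :: "complex \<Rightarrow> complex \<Rightarrow> complex \<Rightarrow> complex \<Rightarrow> complex \<Rightarrow> complex \<Rightarrow> complex
    \<Rightarrow> nat \<Rightarrow> (nat \<Rightarrow> complex) \<Rightarrow> (nat \<Rightarrow> complex) \<Rightarrow> complex" where
  "Zpf t a b c d e f N u w =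
     foldr (\<lambda>j \<psi>. Bop t a b c d e f N (u j) w \<psi>) [1..<Suc N] (Omega N) (\<lambda>i\<in>{1..N}. 1)"

end

theory Submission
  imports Defs
begin

text \<open>The argument is Izergin and Korepin's.  Multiply \<open>Z\<^sub>N\<close> by \<open>(c d)\<^sup>N\<^sup>(\<^sup>N\<^sup>-\<^sup>1\<^sup>)\<^sup>/\<^sup>2\<close> and by
  the two Vandermonde products, and clear the denominators in the determinant on the right.
  Both sides then (i) vanish at \<open>u\<^sub>N = 0\<close> and at \<open>u\<^sub>N = u\<^sub>j\<close>, (ii) change sign under a transposition
  of adjacent \<open>w\<^sub>k\<close> (for \<open>Z\<^sub>N\<close> this is the symmetry coming from the exchange relation
  \<open>R B(u|w) = B(u|w') R\<close>), and (iii) satisfy the same recursion in \<open>N\<close> at \<open>a u\<^sub>N + b w\<^sub>N = 0\<close>,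
  hence by (ii) at every \<open>a u\<^sub>N + b w\<^sub>k = 0\<close>.  By induction on \<open>N\<close> they agree at \<open>2N\<close> points,
  which for generic parameters are distinct, and both are polynomials of degree \<open>\<le> 2N - 1\<close>
  in \<open>u\<^sub>N\<close>; polynomiality in all variables removes the genericity.\<close>

section \<open>Polynomial functions\<close>

definition poly_fun_deg :: "nat \<Rightarrow> ('a::idom \<Rightarrow> 'a) \<Rightarrow> bool" where
  "poly_fun_deg n F \<longleftrightarrow> (\<exists>p. degree p \<le> n \<and> F = poly p)"

definition poly_fun :: "('a::idom \<Rightarrow> 'a) \<Rightarrow> bool" where
  "poly_fun F \<longleftrightarrow> (\<exists>n. poly_fun_deg n F)"

lemma poly_fun_deg_const [simp, intro]: "poly_fun_deg n (\<lambda>x. c)"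
  unfolding poly_fun_deg_def by (intro exI[of _ "[:c:]"]) auto

lemma poly_fun_deg_linear [intro]: "poly_fun_deg 1 (\<lambda>x. p + q * x)"
  unfolding poly_fun_deg_def by (intro exI[of _ "[:p, q:]"]) (auto simp: fun_eq_iff)

lemma poly_fun_deg_mono: "poly_fun_deg n F \<Longrightarrow> n \<le> m \<Longrightarrow> poly_fun_deg m F"
  unfolding poly_fun_deg_def using order.trans by blast

lemma poly_fun_deg_add:
  "poly_fun_deg n F \<Longrightarrow> poly_fun_deg n G \<Longrightarrow> poly_fun_deg n (\<lambda>x. F x + G x)"
proof -
  assume "poly_fun_deg n F" "poly_fun_deg n G"
  then obtain p q where "degree p \<le> n" "F = poly p" "degree q \<le> n" "G = poly q"
    unfolding poly_fun_deg_def by blast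
  then show ?thesis
    unfolding poly_fun_deg_def by (intro exI[of _ "p + q"]) (auto simp: degree_add_le fun_eq_iff)
qed

lemma poly_fun_deg_diff:
  "poly_fun_deg n F \<Longrightarrow> poly_fun_deg n G \<Longrightarrow> poly_fun_deg n (\<lambda>x. F x - G x)"
proof -
  assume "poly_fun_deg n F" "poly_fun_deg n G"
  then obtain p q where "degree p \<le> n" "F = poly p" "degree q \<le> n" "G = poly q"
    unfolding poly_fun_deg_def by blast
  then show ?thesis
    unfolding poly_fun_deg_def by (intro exI[of _ "p - q"]) (auto simp: degree_diff_le fun_eq_iff)
qed

lemma poly_fun_deg_mult:
  "poly_fun_deg n F \<Longrightarrow> poly_fun_deg m G \<Longrightarrow> poly_fun_deg (n + m) (\<lambda>x. F x * G x)"
proof -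
  assume "poly_fun_deg n F" "poly_fun_deg m G"
  then obtain p q where "degree p \<le> n" "F = poly p" "degree q \<le> m" "G = poly q"
    unfolding poly_fun_deg_def by blast
  then show ?thesis
    unfolding poly_fun_deg_def
    by (intro exI[of _ "p * q"]) (auto simp: fun_eq_iff intro: order.trans[OF degree_mult_le])
qed

lemma poly_fun_deg_sum:
  "(\<And>i. i \<in> A \<Longrightarrow> poly_fun_deg n (F i)) \<Longrightarrow> poly_fun_deg n (\<lambda>x. \<Sum>i\<in>A. F i x)"
proof (induction A rule: infinite_finite_induct)
  case (insert i A)
  then show ?case using poly_fun_deg_add[of n "F i"] by auto
qed auto

lemma poly_fun_deg_prod:
  "(\<And>i. i \<in> A \<Longrightarrow> poly_fun_deg (n i) (F i)) \<Longrightarrow> poly_fun_deg (\<Sum>i\<in>A. n i) (\<lambda>x. \<Prod>i\<in>A. F i x)"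
proof (induction A rule: infinite_finite_induct)
  case (insert i A)
  then show ?case using poly_fun_deg_mult[of "n i" "F i"] by auto
qed auto

lemma poly_fun_deg_eq_0:
  assumes "poly_fun_deg n F" "n < card S" "\<And>x. x \<in> S \<Longrightarrow> F x = 0"
  shows "F y = 0"
proof -
  obtain p where p: "degree p \<le> n" "F = poly p"
    using assms(1) unfolding poly_fun_deg_def by auto
  have "p = 0"
    by (rule poly_eqI_degree[of S]) (use assms p in auto)
  then show ?thesis using p by simp
qed

lemma poly_fun_const [simp, intro]: "poly_fun (\<lambda>x. c)"
  unfolding poly_fun_def by auto

lemma poly_fun_linear [intro]: "poly_fun (\<lambda>x. p + q * x)"
  unfolding poly_fun_def by auto

lemma poly_fun_id [intro]: "poly_fun (\<lambda>x. x)"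
  using poly_fun_linear[of 0 1] by simp

lemma poly_fun_add: "poly_fun F \<Longrightarrow> poly_fun G \<Longrightarrow> poly_fun (\<lambda>x. F x + G x)"
  unfolding poly_fun_def
  by (metis max.cobounded1 max.cobounded2 poly_fun_deg_add poly_fun_deg_mono)

lemma poly_fun_diff: "poly_fun F \<Longrightarrow> poly_fun G \<Longrightarrow> poly_fun (\<lambda>x. F x - G x)"
  unfolding poly_fun_def
  by (metis max.cobounded1 max.cobounded2 poly_fun_deg_diff poly_fun_deg_mono)

lemma poly_fun_uminus: "poly_fun F \<Longrightarrow> poly_fun (\<lambda>x. - F x)"
  using poly_fun_diff[OF poly_fun_const, of F 0] by simp

lemma poly_fun_mult: "poly_fun F \<Longrightarrow> poly_fun G \<Longrightarrow> poly_fun (\<lambda>x. F x * G x)"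
  unfolding poly_fun_def by (blast intro: poly_fun_deg_mult)

lemma poly_fun_if: "poly_fun F \<Longrightarrow> poly_fun G \<Longrightarrow> poly_fun (\<lambda>x. if P then F x else G x)"
  by (cases P) simp_all

lemma poly_fun_sum: "(\<And>i. i \<in> A \<Longrightarrow> poly_fun (F i)) \<Longrightarrow> poly_fun (\<lambda>x. \<Sum>i\<in>A. F i x)"
proof (induction A rule: infinite_finite_induct)
  case (insert i A)
  then show ?case using poly_fun_add[of "F i"] by auto
qed auto

lemma poly_fun_prod: "(\<And>i. i \<in> A \<Longrightarrow> poly_fun (F i)) \<Longrightarrow> poly_fun (\<lambda>x. \<Prod>i\<in>A. F i x)"
proof (induction A rule: infinite_finite_induct)
  case (insert i A)
  then show ?case using poly_fun_mult[of "F i"] by auto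
qed auto

lemma eventually_cofinite_affine_neq:
  fixes p q p' q' :: "'a::field"
  assumes "q \<noteq> q'"
  shows "\<forall>\<^sub>F s in cofinite. p + q * s \<noteq> p' + q' * s"
proof -
  have "{s. p + q * s = p' + q' * s} \<subseteq> {(p' - p) / (q - q')}"
    using assms by (auto simp: field_simps)
  then show ?thesis
    unfolding eventually_cofinite by (auto intro: finite_subset)
qed

lemma poly_fun_eq_0_if_eventually:
  fixes F :: "'a::{idom, ring_char_0} \<Rightarrow> 'a"
  assumes "poly_fun F" "\<forall>\<^sub>F x in cofinite. F x = 0"
  shows "F y = 0"
proof (rule ccontr)
  assume "F y \<noteq> 0"
  obtain p where p: "F = poly p"
    using assms(1) unfolding poly_fun_def poly_fun_deg_def by auto
  with \<open>F y \<noteq> 0\<close> have "finite {x. F x = 0}"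
    using poly_roots_finite[of p] by fastforce
  moreover have "finite {x. F x \<noteq> 0}"
    using assms(2) by (simp add: eventually_cofinite)
  ultimately have "finite ({x. F x = 0} \<union> {x. F x \<noteq> 0})"
    by blast
  moreover have "{x. F x = 0} \<union> {x. F x \<noteq> 0} = UNIV"
    by blast
  ultimately have "finite (UNIV :: 'a set)"
    by simp
  then show False by (simp add: infinite_UNIV_char_0)
qed

definition vandermonde_prod :: "nat \<Rightarrow> (nat \<Rightarrow> 'a::comm_ring_1) \<Rightarrow> 'a" where
  "vandermonde_prod n v = (\<Prod>j=1..n. \<Prod>k\<in>{j<..n}. v k - v j)"

lemma vandermonde_prod_Suc:
  "vandermonde_prod (Suc n) v = vandermonde_prod n v * (\<Prod>j=1..n. v (Suc n) - v j)"
proof -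
  have "{j<..Suc n} = insert (Suc n) {j<..n}" if "j \<le> n" for j
    using that by auto
  then have "(\<Prod>j=1..n. \<Prod>k\<in>{j<..Suc n}. v k - v j) =
      (\<Prod>j=1..n. (\<Prod>k\<in>{j<..n}. v k - v j) * (v (Suc n) - v j))"
    by (intro prod.cong) (auto simp: mult.commute)
  then show ?thesis
    unfolding vandermonde_prod_def by (simp add: prod.nat_ivl_Suc' prod.distrib)
qed

lemma vandermonde_prod_swap_adjacent:
  assumes "1 \<le> k" "Suc k \<le> n"
  shows "vandermonde_prod n (v \<circ> Transposition.transpose k (Suc k)) = - vandermonde_prod n v"
proof -
  let ?\<tau> = "Transposition.transpose k (Suc k)"
  let ?P = "Sigma {1..n} (\<lambda>j. {j<..n})"
  let ?P' = "?P - {(k, Suc k)}"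
  let ?g = "\<lambda>p. v (snd p) - v (fst p)"
  let ?\<phi> = "\<lambda>p. (?\<tau> (fst p), ?\<tau> (snd p))"
  have pairs: "vandermonde_prod n v = (\<Prod>p\<in>?P. v (snd p) - v (fst p))" for v :: "nat \<Rightarrow> 'a"
    unfolding vandermonde_prod_def by (subst prod.Sigma) (auto simp: case_prod_unfold)
  have mem: "(k, Suc k) \<in> ?P" using assms by auto
  have "?\<phi> \<in> ?P' \<rightarrow> ?P'"
    using assms by (auto simp: Transposition.transpose_def split: if_splits)
  then have bij: "bij_betw ?\<phi> ?P' ?P'"
    by (intro bij_betwI[where g = ?\<phi>]) auto
  have "vandermonde_prod n (v \<circ> ?\<tau>) = ?g (?\<phi> (k, Suc k)) * (\<Prod>p\<in>?P'. ?g (?\<phi> p))"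
    unfolding pairs using mem by (subst prod.remove[of _ "(k, Suc k)"]) auto
  also have "(\<Prod>p\<in>?P'. ?g (?\<phi> p)) = (\<Prod>p\<in>?P'. ?g p)"
    using prod.reindex_bij_betw[OF bij, of ?g] by simp
  also have "?g (?\<phi> (k, Suc k)) * (\<Prod>p\<in>?P'. ?g p) = - (?g (k, Suc k) * (\<Prod>p\<in>?P'. ?g p))"
    by (simp add: algebra_simps)
  also have "?g (k, Suc k) * (\<Prod>p\<in>?P'. ?g p) = vandermonde_prod n v"
    unfolding pairs using mem by (subst (2) prod.remove[of _ "(k, Suc k)"]) auto
  finally show ?thesis .
qed

lemma det_mat_scale_rows:
  "det (mat n n (\<lambda>(i, j). s i * B i j)) = (\<Prod>i<n. s i) * det (mat n n (\<lambda>(i, j). B i j))"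
proof -
  have "det (mat n n (\<lambda>(i, j). s i * B i j)) =
      (\<Sum>p\<in>{p. p permutes {0..<n}}. signof p * (\<Prod>i=0..<n. s i * B i (p i)))"
    by (subst det_def'[of _ n]) (auto intro!: sum.cong prod.cong simp: permutes_def)
  also have "\<dots> = (\<Sum>p\<in>{p. p permutes {0..<n}}. (\<Prod>i<n. s i) * (signof p * (\<Prod>i=0..<n. B i (p i))))"
    by (simp add: prod.distrib atLeast0LessThan mult_ac)
  also have "\<dots> = (\<Prod>i<n. s i) * det (mat n n (\<lambda>(i, j). B i j))"
    by (subst det_def'[of _ n]) (auto intro!: sum.cong prod.cong simp: permutes_def sum_distrib_left)
  finally show ?thesis .
qed

lemma sum2_mult_sum_commute:
  fixes R :: "'x \<Rightarrow> 'y \<Rightarrow> 'a::comm_semiring_0"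
  shows "(\<Sum>x\<in>X. \<Sum>y\<in>Y. R x y * (\<Sum>i\<in>I. L i * F i x y)) =
    (\<Sum>i\<in>I. L i * (\<Sum>x\<in>X. \<Sum>y\<in>Y. R x y * F i x y))"
proof -
  have "(\<Sum>x\<in>X. \<Sum>y\<in>Y. R x y * (\<Sum>i\<in>I. L i * F i x y)) =
      (\<Sum>x\<in>X. \<Sum>y\<in>Y. \<Sum>i\<in>I. L i * (R x y * F i x y))"
    by (simp add: sum_distrib_left mult_ac)
  also have "\<dots> = (\<Sum>i\<in>I. \<Sum>x\<in>X. \<Sum>y\<in>Y. L i * (R x y * F i x y))"
    by (subst sum.swap) (simp add: sum.swap[of _ Y])
  finally show ?thesis by (simp add: sum_distrib_left)
qed

lemma sum2_sum_mult_commute: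
  fixes R :: "'x \<Rightarrow> 'y \<Rightarrow> 'a::comm_semiring_0"
  shows "(\<Sum>x\<in>X. \<Sum>y\<in>Y. (\<Sum>i\<in>I. L i * F i x y) * R x y) =
    (\<Sum>i\<in>I. L i * (\<Sum>x\<in>X. \<Sum>y\<in>Y. F i x y * R x y))"
  using sum2_mult_sum_commute[where R=R and L=L and F=F and I=I and X=X and Y=Y]
  by (simp add: mult.commute)

abbreviation ones :: "nat \<Rightarrow> nat \<Rightarrow> nat" where
  "ones N \<equiv> (\<lambda>i\<in>{1..N}. 1)"

abbreviation zeros :: "nat \<Rightarrow> nat \<Rightarrow> nat" where
  "zeros N \<equiv> (\<lambda>i\<in>{1..N}. 0)"

lemma finite_configs [simp]: "finite (configs N)"
  unfolding configs_def by (simp add: finite_PiE)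

lemma configs_memD: "\<beta> \<in> configs N \<Longrightarrow> i \<in> {1..N} \<Longrightarrow> \<beta> i \<in> {0, 1}"
  unfolding configs_def by auto

lemma ones_in_configs: "ones N \<in> configs N"
  and zeros_in_configs: "zeros N \<in> configs N"
  unfolding configs_def by auto

lemma configs_update2:
  assumes "\<beta> \<in> configs N" "1 \<le> k" "Suc k \<le> N" "x \<in> {0, 1}" "y \<in> {0, 1}"
  shows "\<beta>(k := x, Suc k := y) \<in> configs N"
  using assms unfolding configs_def by (auto simp: PiE_def extensional_def Pi_def)

lemma sum_configs_Suc:
  "(\<Sum>\<beta>\<in>configs (Suc n). g \<beta>) = (\<Sum>\<beta>\<in>configs n. g (\<beta>(Suc n := 0)) + g (\<beta>(Suc n := 1)))"
proof -
  let ?ext = "\<lambda>(y, \<beta>). \<beta>(Suc n := y)"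
  have "{1..Suc n} = insert (Suc n) {1..n}" by auto
  then have configs: "configs (Suc n) = ?ext ` ({0, 1} \<times> configs n)"
    unfolding configs_def using PiE_insert_eq[of "Suc n" "{1..n}" "\<lambda>_. {0::nat, 1}"] by simp
  have inj: "inj_on ?ext ({0, 1} \<times> configs n)"
    unfolding configs_def by (rule inj_combinator) auto
  have "(\<Sum>\<beta>\<in>configs (Suc n). g \<beta>) = (\<Sum>y\<in>{0::nat, 1}. \<Sum>\<beta>\<in>configs n. g (\<beta>(Suc n := y)))"
    unfolding configs sum.reindex[OF inj] sum.cartesian_product by (simp add: case_prod_unfold)
  also have "\<dots> = (\<Sum>\<beta>\<in>configs n. g (\<beta>(Suc n := 0)) + g (\<beta>(Suc n := 1)))"
    by (simp add: sum.distrib)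
  finally show ?thesis .
qed

lemma sum_configs_update2:
  assumes "\<beta> \<in> configs N" "1 \<le> k" "Suc k \<le> N"
  shows "(\<Sum>x\<in>{0, 1}. \<Sum>y\<in>{0, 1}. H (\<beta>(k := x, Suc k := y))) =
    (\<Sum>\<gamma>\<in>configs N. if \<forall>i. i \<noteq> k \<and> i \<noteq> Suc k \<longrightarrow> \<beta> i = \<gamma> i then H \<gamma> else (0::'a::comm_monoid_add))"
proof -
  let ?upd = "\<lambda>(x, y). \<beta>(k := x, Suc k := y)"
  let ?P = "\<lambda>\<gamma>. \<forall>i. i \<noteq> k \<and> i \<noteq> Suc k \<longrightarrow> \<beta> i = \<gamma> i"
  have "{\<gamma>\<in>configs N. ?P \<gamma>} \<subseteq> ?upd ` ({0, 1} \<times> {0, 1})"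
  proof
    fix \<gamma> assume \<gamma>: "\<gamma> \<in> {\<gamma>\<in>configs N. ?P \<gamma>}"
    then have "\<gamma> = \<beta>(k := \<gamma> k, Suc k := \<gamma> (Suc k))"
      by (auto simp: fun_eq_iff)
    moreover have "\<gamma> k \<in> {0, 1}" "\<gamma> (Suc k) \<in> {0, 1}"
      using \<gamma> assms configs_memD[of \<gamma> N] by auto
    ultimately show "\<gamma> \<in> ?upd ` ({0, 1} \<times> {0, 1})"
      by (auto intro!: image_eqI[of _ _ "(\<gamma> k, \<gamma> (Suc k))"])
  qed
  moreover have "?upd ` ({0, 1} \<times> {0, 1}) \<subseteq> {\<gamma>\<in>configs N. ?P \<gamma>}"
    using configs_update2[OF assms] by auto
  ultimately have set: "{\<gamma>\<in>configs N. ?P \<gamma>} = ?upd ` ({0, 1} \<times> {0, 1})"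
    by (rule antisym)
  have inj: "inj_on ?upd ({0, 1} \<times> {0, 1})"
    by (auto simp: inj_on_def fun_eq_iff)
  have "(\<Sum>\<gamma>\<in>configs N. if ?P \<gamma> then H \<gamma> else 0) = (\<Sum>\<gamma>\<in>{\<gamma>\<in>configs N. ?P \<gamma>}. H \<gamma>)"
    by (simp add: sum.inter_filter)
  also have "\<dots> = (\<Sum>x\<in>{0, 1}. \<Sum>y\<in>{0, 1}. H (\<beta>(k := x, Suc k := y)))"
    unfolding set sum.reindex[OF inj] sum.cartesian_product by (simp add: case_prod_unfold)
  finally show ?thesis by simp
qed

lemma sum_configs_update2_swap:
  fixes G :: "(nat \<Rightarrow> nat) \<Rightarrow> (nat \<Rightarrow> nat) \<Rightarrow> 'a::comm_monoid_add"
  assumes "1 \<le> k" "Suc k \<le> N"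
  shows "(\<Sum>\<beta>\<in>configs N. \<Sum>x\<in>{0, 1}. \<Sum>y\<in>{0, 1}. G \<beta> (\<beta>(k := x, Suc k := y))) =
         (\<Sum>\<beta>\<in>configs N. \<Sum>x\<in>{0, 1}. \<Sum>y\<in>{0, 1}. G (\<beta>(k := x, Suc k := y)) \<beta>)"
proof -
  let ?P = "\<lambda>\<beta> \<gamma>. \<forall>i. i \<noteq> k \<and> i \<noteq> Suc k \<longrightarrow> \<beta> i = \<gamma> i"
  have "(\<Sum>\<beta>\<in>configs N. \<Sum>x\<in>{0, 1}. \<Sum>y\<in>{0, 1}. G \<beta> (\<beta>(k := x, Suc k := y))) =
      (\<Sum>\<beta>\<in>configs N. \<Sum>\<gamma>\<in>configs N. if ?P \<beta> \<gamma> then G \<beta> \<gamma> else 0)"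
    by (rule sum.cong[OF refl], rule sum_configs_update2) (use assms in auto)
  also have "\<dots> = (\<Sum>\<gamma>\<in>configs N. \<Sum>\<beta>\<in>configs N. if ?P \<gamma> \<beta> then G \<beta> \<gamma> else 0)"
    by (subst sum.swap) (intro sum.cong refl, metis)
  also have "\<dots> = (\<Sum>\<beta>\<in>configs N. \<Sum>x\<in>{0, 1}. \<Sum>y\<in>{0, 1}. G (\<beta>(k := x, Suc k := y)) \<beta>)"
    by (rule sum.cong[OF refl], rule sum_configs_update2[symmetric]) (use assms in auto)
  finally show ?thesis .
qed

lemma Omega_eq: "\<beta> \<in> configs N \<Longrightarrow> Omega N \<beta> = (if \<beta> = zeros N then 1 else 0)"
  unfolding Omega_def configs_def by (auto simp: fun_eq_iff PiE_def extensional_def)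

definition local_state :: "nat \<Rightarrow> ((nat \<Rightarrow> nat) \<Rightarrow> complex) \<Rightarrow> bool" where
  "local_state n \<psi> \<longleftrightarrow> (\<forall>\<beta> \<beta>'. (\<forall>i\<in>{1..n}. \<beta> i = \<beta>' i) \<longrightarrow> \<psi> \<beta> = \<psi> \<beta>')"

lemma local_state_Omega: "local_state n (Omega n)"
  unfolding local_state_def Omega_def by auto

lemma local_state_scale: "local_state n \<psi> \<Longrightarrow> local_state n (\<lambda>\<beta>. k * \<psi> \<beta>)"
  unfolding local_state_def by metis

section \<open>The partition function\<close>

locale six_vertex =
  fixes t a b c d e f :: complex
begin

abbreviation "L \<equiv> Lel t a b c d e f"
abbreviation "B_part \<equiv> Bpart t a b c d e f"
abbreviation "B_elem \<equiv> Bel t a b c d e f"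
abbreviation "B_act \<equiv> Bop t a b c d e f"
abbreviation "Z \<equiv> Zpf t a b c d e f"

abbreviation B_chain ::
    "nat \<Rightarrow> (nat \<Rightarrow> complex) \<Rightarrow> (nat \<Rightarrow> complex) \<Rightarrow> nat list
      \<Rightarrow> ((nat \<Rightarrow> nat) \<Rightarrow> complex) \<Rightarrow> (nat \<Rightarrow> nat) \<Rightarrow> complex" where
  "B_chain N u w js \<equiv> foldr (\<lambda>j \<psi>. B_act N (u j) w \<psi>) js"

lemma Z_eq_B_chain: "Z N u w = B_chain N u w [1..<Suc N] (Omega N) (ones N)"
  unfolding Zpf_def ..

lemma B_part_cong:
  "(\<And>i. i \<in> {1..k} \<Longrightarrow> \<delta> i = \<delta>' i \<and> \<beta> i = \<beta>' i \<and> w i = w' i) \<Longrightarrow>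
   B_part u w k \<alpha> \<delta> \<beta> = B_part u w' k \<alpha> \<delta>' \<beta>'"
proof (induction k arbitrary: \<alpha>)
  case (Suc k)
  then have "\<delta> (Suc k) = \<delta>' (Suc k)" "\<beta> (Suc k) = \<beta>' (Suc k)" "w (Suc k) = w' (Suc k)"
    and "B_part u w k \<alpha>' \<delta> \<beta> = B_part u w' k \<alpha>' \<delta>' \<beta>'" for \<alpha>'
    by auto
  then show ?case by simp
qed simp

lemma local_state_B_act: "local_state N (B_act N x w \<psi>)"
  unfolding local_state_def Bop_def Bel_def
  by (auto intro!: sum.cong arg_cong2[where f="(*)"] B_part_cong)

lemma B_act_cong: "(\<And>\<beta>. \<beta> \<in> configs N \<Longrightarrow> \<psi> \<beta> = \<psi>' \<beta>) \<Longrightarrow> B_act N x w \<psi> = B_act N x w \<psi>'"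
  unfolding Bop_def by (intro ext sum.cong) auto

lemma B_chain_cong:
  "(\<And>\<beta>. \<beta> \<in> configs N \<Longrightarrow> \<psi> \<beta> = \<psi>' \<beta>) \<Longrightarrow> \<delta> \<in> configs N \<Longrightarrow>
   B_chain N u w js \<psi> \<delta> = B_chain N u w js \<psi>' \<delta>"
proof (induction js arbitrary: \<delta>)
  case (Cons j js)
  then show ?case by (simp add: B_act_cong[of N "B_chain N u w js \<psi>"])
qed simp

lemma local_state_B_chain: "local_state N \<psi> \<Longrightarrow> local_state N (B_chain N u w js \<psi>)"
  by (cases js) (auto simp: local_state_B_act)

lemma B_act_scale: "B_act N x w (\<lambda>\<beta>. k * \<psi> \<beta>) \<delta> = k * B_act N x w \<psi> \<delta>"
  unfolding Bop_def by (simp add: sum_distrib_left mult.left_commute)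

lemma B_chain_scale: "B_chain N u w js (\<lambda>\<beta>. k * \<psi> \<beta>) \<delta> = k * B_chain N u w js \<psi> \<delta>"
proof (induction js arbitrary: \<delta>)
  case (Cons j js)
  then have "B_chain N u w js (\<lambda>\<beta>. k * \<psi> \<beta>) = (\<lambda>\<delta>. k * B_chain N u w js \<psi> \<delta>)"
    by auto
  then show ?case by (simp add: B_act_scale)
qed simp

lemma Z_Suc_unfold:
  "Z (Suc n) u w = B_chain (Suc n) u w [1..<Suc n] (B_act (Suc n) (u (Suc n)) w (Omega (Suc n))) (ones (Suc n))"
  unfolding Z_eq_B_chain by simp

lemma Z_last_zero:
  assumes "u (Suc n) = 0"
  shows "Z (Suc n) u w = 0"
proof -
  have "B_part 0 w k 0 \<delta> \<beta> = 0" for k \<delta> \<beta>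
    by (induction k) (simp_all add: Lel_def)
  then have "B_act N 0 w \<psi> = (\<lambda>\<delta>. 0)" for N \<psi>
    unfolding Bop_def Bel_def by simp
  moreover have "B_chain N u w js (\<lambda>\<delta>. 0) \<delta> = 0" for N js \<delta>
    using B_chain_scale[of N u w js 0 "\<lambda>\<delta>. 0"] by simp
  ultimately show ?thesis unfolding Z_Suc_unfold assms by simp
qed

subsection \<open>Reduction at a zero of \<open>a u\<^sub>N + b w\<^sub>N\<close>\<close>

lemma B_part_from_vacuum:
  "(\<And>i. i \<in> {1..k} \<Longrightarrow> \<beta> i = 0) \<Longrightarrow>
   B_part x w k 1 \<delta> \<beta> = (\<Prod>i=1..k. if \<delta> i = 0 then e * x + f * w i else 0)"
proof (induction k)
  case (Suc k)
  then show ?case by (simp add: Lel_def prod.nat_ivl_Suc' mult.commute)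
qed simp

lemma B_act_Omega: "B_act N x w (Omega N) \<delta> = B_elem N x w \<delta> (zeros N)"
proof -
  have "B_act N x w (Omega N) \<delta> = (\<Sum>\<beta>\<in>configs N. if \<beta> = zeros N then B_elem N x w \<delta> \<beta> else 0)"
    unfolding Bop_def by (intro sum.cong refl) (simp add: Omega_eq)
  then show ?thesis
    using zeros_in_configs[of N] by (simp add: sum.delta')
qed

text \<open>At the zero \<open>a x + b w\<^sub>n\<^sub>+\<^sub>1 = 0\<close> of \<open>[L]\<^sup>0\<^sup>0\<^sub>0\<^sub>0\<close> the operator \<open>B(x)\<close> acting on the vacuum
  must flip the last site, and every later \<open>B(u\<^sub>j)\<close> passes that occupied site with weight
  \<open>a t u\<^sub>j + b w\<^sub>n\<^sub>+\<^sub>1\<close>.\<close>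

lemma B_act_Omega_frozen:
  assumes "a * x + b * w (Suc n) = 0"
  shows "B_act (Suc n) x w (Omega (Suc n)) \<delta> =
    (if \<delta> (Suc n) = 1 then (1 - t) * c * x * (\<Prod>i=1..n. e * x + f * w i) * Omega n \<delta> else 0)"
proof -
  have vac: "B_part x w n 1 \<delta> (zeros (Suc n)) = (\<Prod>i=1..n. if \<delta> i = 0 then e * x + f * w i else 0)"
    by (rule B_part_from_vacuum) auto
  have "finite A \<Longrightarrow> (\<Prod>i\<in>A. if P i then g i else 0) = (if \<forall>i\<in>A. P i then prod g A else 0)"
    for A P and g :: "nat \<Rightarrow> complex"
    by (induction A rule: finite_induct) auto
  then have "(\<Prod>i=1..n. if \<delta> i = 0 then e * x + f * w i else 0) =
      (\<Prod>i=1..n. e * x + f * w i) * Omega n \<delta>"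
    unfolding Omega_def by simp
  then show ?thesis
    unfolding B_act_Omega Bel_def using assms vac by (simp add: Lel_def)
qed

lemma B_act_last_site_occupied:
  assumes "local_state n \<psi>'" and "\<And>\<beta>. \<psi> \<beta> = (if \<beta> (Suc n) = 1 then \<psi>' \<beta> else 0)"
  shows "B_act (Suc n) y w \<psi> \<delta> =
    (if \<delta> (Suc n) = 1 then (a * t * y + b * w (Suc n)) * B_act n y w \<psi>' \<delta> else 0)"
proof -
  let ?weight = "if \<delta> (Suc n) = 1 then a * t * y + b * w (Suc n) else 0"
  have "B_elem (Suc n) y w \<delta> (\<beta>(Suc n := 0)) * \<psi> (\<beta>(Suc n := 0))
        + B_elem (Suc n) y w \<delta> (\<beta>(Suc n := 1)) * \<psi> (\<beta>(Suc n := 1))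
      = ?weight * (B_elem n y w \<delta> \<beta> * \<psi>' \<beta>)" for \<beta>
  proof -
    have "\<psi> (\<beta>(Suc n := 1)) = \<psi>' \<beta>"
      using assms unfolding local_state_def by auto
    moreover have "B_part y w n \<alpha> \<delta> (\<beta>(Suc n := Suc 0)) = B_part y w n \<alpha> \<delta> \<beta>" for \<alpha>
      by (rule B_part_cong) auto
    ultimately show ?thesis
      using assms(2) unfolding Bel_def by (simp add: Lel_def)
  qed
  then show ?thesis
    unfolding Bop_def sum_configs_Suc by (simp add: sum_distrib_left)
qed

lemma B_chain_last_site_occupied:
  assumes "local_state n \<psi>'" and "\<And>\<beta>. \<psi> \<beta> = (if \<beta> (Suc n) = 1 then \<psi>' \<beta> else 0)"
  shows "B_chain (Suc n) u w js \<psi> \<delta> =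
    (if \<delta> (Suc n) = 1 then (\<Prod>j\<leftarrow>js. a * t * u j + b * w (Suc n)) * B_chain n u w js \<psi>' \<delta> else 0)"
proof (induction js arbitrary: \<delta>)
  case Nil
  then show ?case using assms(2) by simp
next
  case (Cons j js)
  let ?P = "\<Prod>j\<leftarrow>js. a * t * u j + b * w (Suc n)"
  have "local_state n (\<lambda>\<beta>. ?P * B_chain n u w js \<psi>' \<beta>)"
    by (intro local_state_scale local_state_B_chain assms(1))
  then have "B_chain (Suc n) u w (j # js) \<psi> \<delta> =
      (if \<delta> (Suc n) = 1 then (a * t * u j + b * w (Suc n))
         * B_act n (u j) w (\<lambda>\<beta>. ?P * B_chain n u w js \<psi>' \<beta>) \<delta> else 0)"
    unfolding foldr_Cons o_apply by (rule B_act_last_site_occupied) (use Cons.IH in auto)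
  then show ?case by (simp add: B_act_scale)
qed

lemma Z_reduction:
  assumes "a * u (Suc n) + b * w (Suc n) = 0"
  shows "Z (Suc n) u w = (1 - t) * c * u (Suc n) * (\<Prod>i=1..n. e * u (Suc n) + f * w i)
     * (\<Prod>j=1..n. a * t * u j + b * w (Suc n)) * Z n u w"
proof -
  let ?K = "(1 - t) * c * u (Suc n) * (\<Prod>i=1..n. e * u (Suc n) + f * w i)"
  have "Z (Suc n) u w = (\<Prod>j\<leftarrow>[1..<Suc n]. a * t * u j + b * w (Suc n)) *
      B_chain n u w [1..<Suc n] (\<lambda>\<beta>. ?K * Omega n \<beta>) (ones (Suc n))"
    unfolding Z_Suc_unfold
    by (subst B_chain_last_site_occupied[OF local_state_scale[OF local_state_Omega]])
      (auto simp: B_act_Omega_frozen[of "u (Suc n)" w n, OF assms])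
  also have "\<dots> = (\<Prod>j\<leftarrow>[1..<Suc n]. a * t * u j + b * w (Suc n)) * ?K *
      B_chain n u w [1..<Suc n] (Omega n) (ones (Suc n))"
    by (simp add: B_chain_scale)
  also have "B_chain n u w [1..<Suc n] (Omega n) (ones (Suc n)) = Z n u w"
    using local_state_B_chain[OF local_state_Omega] unfolding Z_eq_B_chain local_state_def by auto
  also have "(\<Prod>j\<leftarrow>[1..<Suc n]. a * t * u j + b * w (Suc n)) = (\<Prod>j=1..n. a * t * u j + b * w (Suc n))"
  proof -
    have "set [1..<Suc n] = {1..n}" by auto
    then show ?thesis by (simp add: prod.distinct_set_conv_list[symmetric])
  qed
  finally show ?thesis by (simp add: mult_ac)
qed

subsection \<open>The exchange relation\<close>

text \<open>The \<open>R\<close>-matrix of the model (rescaled by \<open>a b c d\<close>); it intertwines two \<open>L\<close>-operators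
  with quantum parameters \<open>w\<^sub>1, w\<^sub>2\<close> once \<open>c d + a f = 0\<close> and \<open>t c d + b e = 0\<close>.\<close>

definition R_mat :: "complex \<Rightarrow> complex \<Rightarrow> nat \<Rightarrow> nat \<Rightarrow> nat \<Rightarrow> nat \<Rightarrow> complex" where
  "R_mat w1 w2 d1 d2 x y =
    (if (d1, d2, x, y) = (0, 0, 0, 0) then a * b * c * d * (t * w2 - w1)
     else if (d1, d2, x, y) = (1, 1, 1, 1) then a * b * c * d * (t * w2 - w1)
     else if (d1, d2, x, y) = (0, 1, 0, 1) then a * b * c * d * (t - 1) * w2
     else if (d1, d2, x, y) = (1, 0, 1, 0) then a * b * c * d * (t - 1) * w1
     else if (d1, d2, x, y) = (0, 1, 1, 0) then t * (c * d)\<^sup>2 * (w1 - w2)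
     else if (d1, d2, x, y) = (1, 0, 0, 1) then (a * b)\<^sup>2 * (w1 - w2)
     else 0)"

definition R_act :: "nat \<Rightarrow> complex \<Rightarrow> complex \<Rightarrow> ((nat \<Rightarrow> nat) \<Rightarrow> complex) \<Rightarrow> (nat \<Rightarrow> nat) \<Rightarrow> complex" where
  "R_act k w1 w2 \<psi> \<delta> =
    (\<Sum>x\<in>{0, 1}. \<Sum>y\<in>{0, 1}. R_mat w1 w2 (\<delta> k) (\<delta> (Suc k)) x y * \<psi> (\<delta>(k := x, Suc k := y)))"

lemma R_act_Omega:
  assumes "1 \<le> k" "Suc k \<le> N" "\<delta> \<in> configs N"
  shows "R_act k w1 w2 (Omega N) \<delta> = a * b * c * d * (t * w2 - w1) * Omega N \<delta>"
proof -
  have kk: "k \<in> {1..N}" "Suc k \<in> {1..N}" using assms by auto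
  let ?rest = "\<forall>i\<in>{1..N}. i \<noteq> k \<and> i \<noteq> Suc k \<longrightarrow> \<delta> i = 0"
  have "Omega N (\<delta>(k := x, Suc k := y)) = (if x = 0 \<and> y = 0 \<and> ?rest then 1 else 0)" for x y
    unfolding Omega_def using kk by auto
  moreover have "Omega N \<delta> = (if \<delta> k = 0 \<and> \<delta> (Suc k) = 0 \<and> ?rest then 1 else 0)"
    unfolding Omega_def using kk by metis
  moreover have "\<delta> k \<in> {0, 1}" "\<delta> (Suc k) \<in> {0, 1}"
    using configs_memD[OF assms(3)] kk by auto
  ultimately show ?thesis
    unfolding R_act_def by (elim insertE emptyE) (simp_all add: R_mat_def)
qed

lemma R_act_ones:
  assumes "1 \<le> k" "Suc k \<le> N"
  shows "R_act k w1 w2 \<phi> (ones N) = a * b * c * d * (t * w2 - w1) * \<phi> (ones N)"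
proof -
  have "(ones N)(k := 1, Suc k := 1) = ones N"
    using assms by (auto simp: fun_eq_iff)
  then show ?thesis unfolding R_act_def using assms by (simp add: R_mat_def)
qed

end

locale integrable_six_vertex = six_vertex +
  assumes a_nonzero: "a \<noteq> 0" and b_nonzero: "b \<noteq> 0"
    and c_nonzero: "c \<noteq> 0" and d_nonzero: "d \<noteq> 0"
    and f_eq: "c * d + a * f = 0" and e_eq: "t * c * d + b * e = 0"
begin

lemma RLL:
  assumes "\<alpha>' \<in> {0, 1}" "\<alpha> \<in> {0, 1}" "d1 \<in> {0, 1}" "d2 \<in> {0, 1}" "b1 \<in> {0, 1}" "b2 \<in> {0, 1}"
  shows "(\<Sum>x\<in>{0, 1}. \<Sum>y\<in>{0, 1}. R_mat w1 w2 d1 d2 x y *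
      (\<Sum>m\<in>{0, 1}. L u w2 \<alpha>' y m b2 * L u w1 m x \<alpha> b1))
   = (\<Sum>x\<in>{0, 1}. \<Sum>y\<in>{0, 1}. (\<Sum>m\<in>{0, 1}. L u w1 \<alpha>' d2 m y * L u w2 m d1 \<alpha> x)
      * R_mat w1 w2 x y b1 b2)"
proof -
  have e: "e = - t * c * d / b" and f: "f = - c * d / a"
    using e_eq f_eq a_nonzero b_nonzero by (auto simp: field_simps eq_neg_iff_add_eq_0)
  show ?thesis
    using assms unfolding insert_iff singleton_iff empty_iff simp_thms
    by (elim disjE) (simp_all add: Lel_def R_mat_def e f field_simps power2_eq_square a_nonzero b_nonzero)
qed

lemma B_part_exchange_adjacent:
  assumes k: "1 \<le> k"
    and bits: "\<delta> k \<in> {0, 1}" "\<delta> (Suc k) \<in> {0, 1}" "\<beta> k \<in> {0, 1}" "\<beta> (Suc k) \<in> {0, 1}" "\<alpha>' \<in> {0, 1}"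
  shows "(\<Sum>x\<in>{0, 1}. \<Sum>y\<in>{0, 1}. R_mat (w k) (w (Suc k)) (\<delta> k) (\<delta> (Suc k)) x y *
       B_part u w (Suc k) \<alpha>' (\<delta>(k := x, Suc k := y)) \<beta>)
   = (\<Sum>x\<in>{0, 1}. \<Sum>y\<in>{0, 1}. B_part u (w(k := w (Suc k), Suc k := w k)) (Suc k) \<alpha>' \<delta> (\<beta>(k := x, Suc k := y))
       * R_mat (w k) (w (Suc k)) x y (\<beta> k) (\<beta> (Suc k)))"
proof -
  obtain m where m: "k = Suc m" using k(1) by (cases k) auto
  let ?w' = "w(k := w (Suc k), Suc k := w k)"
  let ?R = "R_mat (w k) (w (Suc k))"
  define P where "P \<alpha> = B_part u w m \<alpha> \<delta> \<beta>" for \<alpha>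
  have P: "B_part u w m \<alpha> (\<delta>(k := x, Suc k := y)) \<beta> = P \<alpha>"
      "B_part u ?w' m \<alpha> \<delta> (\<beta>(k := x, Suc k := y)) = P \<alpha>" for \<alpha> x y
    unfolding P_def by (rule B_part_cong; auto simp: m)+
  have two_sites: "B_part u W (Suc k) \<alpha>' D E =
      (\<Sum>\<gamma>\<in>{0, 1}. L u (W (Suc k)) \<alpha>' (D (Suc k)) \<gamma> (E (Suc k)) *
        (\<Sum>\<alpha>\<in>{0, 1}. L u (W k) \<gamma> (D k) \<alpha> (E k) * B_part u W m \<alpha> D E))" for W D E
    by (simp add: m)
  have "(\<Sum>x\<in>{0, 1}. \<Sum>y\<in>{0, 1}. ?R (\<delta> k) (\<delta> (Suc k)) x y *
       B_part u w (Suc k) \<alpha>' (\<delta>(k := x, Suc k := y)) \<beta>) =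
    (\<Sum>\<alpha>\<in>{0, 1}. P \<alpha> * (\<Sum>x\<in>{0, 1}. \<Sum>y\<in>{0, 1}. ?R (\<delta> k) (\<delta> (Suc k)) x y *
      (\<Sum>\<gamma>\<in>{0, 1}. L u (w (Suc k)) \<alpha>' y \<gamma> (\<beta> (Suc k)) * L u (w k) \<gamma> x \<alpha> (\<beta> k))))"
    unfolding two_sites P by (simp add: algebra_simps m)
  also have "\<dots> = (\<Sum>\<alpha>\<in>{0, 1}. P \<alpha> * (\<Sum>x\<in>{0, 1}. \<Sum>y\<in>{0, 1}.
      (\<Sum>\<gamma>\<in>{0, 1}. L u (w k) \<alpha>' (\<delta> (Suc k)) \<gamma> y * L u (w (Suc k)) \<gamma> (\<delta> k) \<alpha> x)
        * ?R x y (\<beta> k) (\<beta> (Suc k))))"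
    by (rule sum.cong[OF refl], rule arg_cong2[where f = "(*)", OF refl], rule RLL)
      (use assms in auto)
  also have "\<dots> = (\<Sum>x\<in>{0, 1}. \<Sum>y\<in>{0, 1}. B_part u ?w' (Suc k) \<alpha>' \<delta> (\<beta>(k := x, Suc k := y))
       * ?R x y (\<beta> k) (\<beta> (Suc k)))"
    unfolding two_sites P by (simp add: algebra_simps m)
  finally show ?thesis .
qed

lemma B_part_exchange:
  assumes k: "1 \<le> k" "Suc k \<le> n"
    and bits: "\<delta> k \<in> {0, 1}" "\<delta> (Suc k) \<in> {0, 1}" "\<beta> k \<in> {0, 1}" "\<beta> (Suc k) \<in> {0, 1}"
    and "\<alpha>' \<in> {0, 1}"
  shows "(\<Sum>x\<in>{0, 1}. \<Sum>y\<in>{0, 1}. R_mat (w k) (w (Suc k)) (\<delta> k) (\<delta> (Suc k)) x y *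
       B_part u w n \<alpha>' (\<delta>(k := x, Suc k := y)) \<beta>)
   = (\<Sum>x\<in>{0, 1}. \<Sum>y\<in>{0, 1}. B_part u (w(k := w (Suc k), Suc k := w k)) n \<alpha>' \<delta> (\<beta>(k := x, Suc k := y))
       * R_mat (w k) (w (Suc k)) x y (\<beta> k) (\<beta> (Suc k)))"
  using k(2) \<open>\<alpha>' \<in> {0, 1}\<close>
proof (induction n arbitrary: \<alpha>' rule: nat_induct_at_least)
  case base
  then show ?case by (intro B_part_exchange_adjacent k bits)
next
  case (Suc n)
  let ?w' = "w(k := w (Suc k), Suc k := w k)"
  let ?R = "R_mat (w k) (w (Suc k))"
  have far: "(g(k := x, Suc k := y)) (Suc n) = g (Suc n)" for g :: "nat \<Rightarrow> 'z" and x y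
    using Suc.hyps by simp
  have "(\<Sum>x\<in>{0, 1}. \<Sum>y\<in>{0, 1}. ?R (\<delta> k) (\<delta> (Suc k)) x y *
       B_part u w (Suc n) \<alpha>' (\<delta>(k := x, Suc k := y)) \<beta>) =
     (\<Sum>\<alpha>\<in>{0, 1}. L u (w (Suc n)) \<alpha>' (\<delta> (Suc n)) \<alpha> (\<beta> (Suc n)) *
       (\<Sum>x\<in>{0, 1}. \<Sum>y\<in>{0, 1}. ?R (\<delta> k) (\<delta> (Suc k)) x y *
         B_part u w n \<alpha> (\<delta>(k := x, Suc k := y)) \<beta>))"
    unfolding Bpart.simps far by (rule sum2_mult_sum_commute)
  also have "\<dots> = (\<Sum>\<alpha>\<in>{0, 1}. L u (w (Suc n)) \<alpha>' (\<delta> (Suc n)) \<alpha> (\<beta> (Suc n)) *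
       (\<Sum>x\<in>{0, 1}. \<Sum>y\<in>{0, 1}. B_part u ?w' n \<alpha> \<delta> (\<beta>(k := x, Suc k := y))
         * ?R x y (\<beta> k) (\<beta> (Suc k))))"
    by (rule sum.cong[OF refl], rule arg_cong2[where f = "(*)", OF refl], rule Suc.IH) auto
  also have "\<dots> = (\<Sum>x\<in>{0, 1}. \<Sum>y\<in>{0, 1}. B_part u ?w' (Suc n) \<alpha>' \<delta> (\<beta>(k := x, Suc k := y))
       * ?R x y (\<beta> k) (\<beta> (Suc k)))"
    unfolding Bpart.simps far by (rule sum2_sum_mult_commute[symmetric])
  finally show ?case .
qed

lemma R_act_B_act:
  assumes k: "1 \<le> k" "Suc k \<le> N" and \<delta>: "\<delta> \<in> configs N"
  shows "R_act k (w k) (w (Suc k)) (B_act N v w \<psi>) \<delta> =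
     B_act N v (w(k := w (Suc k), Suc k := w k)) (R_act k (w k) (w (Suc k)) \<psi>) \<delta>"
proof -
  let ?w' = "w(k := w (Suc k), Suc k := w k)"
  let ?R = "R_mat (w k) (w (Suc k))"
  let ?upd = "\<lambda>\<beta> x y. \<beta>(k := x, Suc k := y)"
  have kk: "k \<in> {1..N}" "Suc k \<in> {1..N}" and kne: "k \<noteq> Suc k" "Suc k \<noteq> k"
    using k by auto
  have "R_act k (w k) (w (Suc k)) (B_act N v w \<psi>) \<delta> =
     (\<Sum>x\<in>{0, 1}. \<Sum>y\<in>{0, 1}. \<Sum>\<beta>\<in>configs N.
        ?R (\<delta> k) (\<delta> (Suc k)) x y * (B_elem N v w (?upd \<delta> x y) \<beta> * \<psi> \<beta>))"
    unfolding R_act_def Bop_def by (simp only: sum_distrib_left)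
  also have "\<dots> = (\<Sum>\<beta>\<in>configs N. \<Sum>x\<in>{0, 1}. \<Sum>y\<in>{0, 1}.
        ?R (\<delta> k) (\<delta> (Suc k)) x y * (B_elem N v w (?upd \<delta> x y) \<beta> * \<psi> \<beta>))"
    by (subst sum.swap, rule sum.cong[OF refl], rule sum.swap)
  also have "\<dots> = (\<Sum>\<beta>\<in>configs N. \<psi> \<beta> * (\<Sum>x\<in>{0, 1}. \<Sum>y\<in>{0, 1}.
        ?R (\<delta> k) (\<delta> (Suc k)) x y * B_elem N v w (?upd \<delta> x y) \<beta>))"
    by (simp only: sum_distrib_left mult_ac)
  also have "\<dots> = (\<Sum>\<beta>\<in>configs N. \<psi> \<beta> * (\<Sum>x\<in>{0, 1}. \<Sum>y\<in>{0, 1}.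
        B_elem N v ?w' \<delta> (?upd \<beta> x y) * ?R x y (\<beta> k) (\<beta> (Suc k))))"
  proof (rule sum.cong[OF refl], rule arg_cong2[where f = "(*)", OF refl])
    fix \<beta> assume \<beta>: "\<beta> \<in> configs N"
    show "(\<Sum>x\<in>{0, 1}. \<Sum>y\<in>{0, 1}. ?R (\<delta> k) (\<delta> (Suc k)) x y * B_elem N v w (?upd \<delta> x y) \<beta>) =
        (\<Sum>x\<in>{0, 1}. \<Sum>y\<in>{0, 1}. B_elem N v ?w' \<delta> (?upd \<beta> x y) * ?R x y (\<beta> k) (\<beta> (Suc k)))"
      unfolding Bel_def
      using configs_memD[OF \<delta> kk(1)] configs_memD[OF \<delta> kk(2)]
        configs_memD[OF \<beta> kk(1)] configs_memD[OF \<beta> kk(2)]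
      by (intro B_part_exchange k) auto
  qed
  also have "\<dots> = (\<Sum>\<beta>\<in>configs N. \<Sum>x\<in>{0, 1}. \<Sum>y\<in>{0, 1}.
      (\<lambda>\<beta> \<gamma>. \<psi> \<beta> * (B_elem N v ?w' \<delta> \<gamma> * ?R (\<gamma> k) (\<gamma> (Suc k)) (\<beta> k) (\<beta> (Suc k)))) \<beta> (?upd \<beta> x y))"
    by (simp only: sum_distrib_left fun_upd_same fun_upd_other kne not_False_eq_True)
  also have "\<dots> = (\<Sum>\<beta>\<in>configs N. \<Sum>x\<in>{0, 1}. \<Sum>y\<in>{0, 1}.
      (\<lambda>\<beta> \<gamma>. \<psi> \<beta> * (B_elem N v ?w' \<delta> \<gamma> * ?R (\<gamma> k) (\<gamma> (Suc k)) (\<beta> k) (\<beta> (Suc k)))) (?upd \<beta> x y) \<beta>)"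
    by (rule sum_configs_update2_swap[OF k])
  also have "\<dots> = B_act N v ?w' (R_act k (w k) (w (Suc k)) \<psi>) \<delta>"
    unfolding R_act_def Bop_def sum_distrib_left
    by (simp only: fun_upd_same fun_upd_other kne not_False_eq_True mult_ac)
  finally show ?thesis .
qed

lemma R_act_B_chain:
  assumes k: "1 \<le> k" "Suc k \<le> N"
  shows "\<delta> \<in> configs N \<Longrightarrow> R_act k (w k) (w (Suc k)) (B_chain N u w js \<psi>) \<delta> =
     B_chain N u (w(k := w (Suc k), Suc k := w k)) js (R_act k (w k) (w (Suc k)) \<psi>) \<delta>"
proof (induction js arbitrary: \<delta>)
  case (Cons j js)
  have "R_act k (w k) (w (Suc k)) (B_chain N u w (j # js) \<psi>) \<delta> =
      B_act N (u j) (w(k := w (Suc k), Suc k := w k))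
        (R_act k (w k) (w (Suc k)) (B_chain N u w js \<psi>)) \<delta>"
    unfolding foldr_Cons o_apply by (rule R_act_B_act[OF k Cons.prems])
  also have "\<dots> = B_chain N u (w(k := w (Suc k), Suc k := w k)) (j # js)
      (R_act k (w k) (w (Suc k)) \<psi>) \<delta>"
    unfolding foldr_Cons o_apply by (rule fun_cong[OF B_act_cong], rule Cons.IH)
  finally show ?case .
qed (simp add: R_act_def)

text \<open>Both \<open>\<langle>1\<dots>N|\<close> and \<open>|\<Omega>\<rangle>\<close> are eigenvectors of \<open>R\<^sub>k\<^sub>,\<^sub>k\<^sub>+\<^sub>1\<close> with the same eigenvalue, so
  the exchange relation \<open>R B(u|w) = B(u|w') R\<close> makes \<open>Z\<close> symmetric in \<open>w\<^sub>k, w\<^sub>k\<^sub>+\<^sub>1\<close>, as long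
  as that eigenvalue does not vanish.\<close>

lemma Z_swap_adjacent_generic:
  assumes k: "1 \<le> k" "Suc k \<le> N" and "t * w (Suc k) \<noteq> w k"
  shows "Z N u w = Z N u (w(k := w (Suc k), Suc k := w k))"
proof -
  let ?w' = "w(k := w (Suc k), Suc k := w k)"
  let ?r = "a * b * c * d * (t * w (Suc k) - w k)"
  have "?r * Z N u w = R_act k (w k) (w (Suc k)) (B_chain N u w [1..<Suc N] (Omega N)) (ones N)"
    unfolding Z_eq_B_chain by (rule R_act_ones[OF k, symmetric])
  also have "\<dots> = B_chain N u ?w' [1..<Suc N] (R_act k (w k) (w (Suc k)) (Omega N)) (ones N)"
    by (rule R_act_B_chain[OF k ones_in_configs])
  also have "\<dots> = B_chain N u ?w' [1..<Suc N] (\<lambda>\<beta>. ?r * Omega N \<beta>) (ones N)"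
    by (rule B_chain_cong[OF _ ones_in_configs], rule R_act_Omega[OF k])
  also have "\<dots> = ?r * Z N u ?w'"
    unfolding Z_eq_B_chain by (rule B_chain_scale)
  finally show ?thesis
    using assms a_nonzero b_nonzero c_nonzero d_nonzero by simp
qed

end

context six_vertex
begin

lemma L_linear: "L x y \<gamma> \<delta> \<alpha> \<beta> = x * L 1 0 \<gamma> \<delta> \<alpha> \<beta> + y * L 0 1 \<gamma> \<delta> \<alpha> \<beta>"
  by (simp add: Lel_def algebra_simps)

lemma poly_fun_L: "poly_fun U \<Longrightarrow> poly_fun W \<Longrightarrow> poly_fun (\<lambda>s. L (U s) (W s) \<gamma> \<delta> \<alpha> \<beta>)"
  by (subst L_linear) (intro poly_fun_add poly_fun_mult poly_fun_const)

lemma poly_fun_deg_L: "poly_fun_deg 1 (\<lambda>x. L x y \<gamma> \<delta> \<alpha> \<beta>)"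
  using poly_fun_deg_linear[of "y * L 0 1 \<gamma> \<delta> \<alpha> \<beta>" "L 1 0 \<gamma> \<delta> \<alpha> \<beta>"]
  by (subst L_linear) (simp add: algebra_simps)

lemma poly_fun_B_part:
  assumes "poly_fun U" "\<And>i. poly_fun (\<lambda>s. W s i)"
  shows "poly_fun (\<lambda>s. B_part (U s) (W s) k \<alpha> \<delta> \<beta>)"
proof (induction k arbitrary: \<alpha>)
  case (Suc k)
  show ?case
    unfolding Bpart.simps by (intro poly_fun_sum poly_fun_mult poly_fun_L assms Suc)
qed simp

lemma poly_fun_deg_B_part: "poly_fun_deg k (\<lambda>x. B_part x w k \<alpha> \<delta> \<beta>)"
proof (induction k arbitrary: \<alpha>)
  case (Suc k)
  have "poly_fun_deg (1 + k) (\<lambda>x. \<Sum>\<alpha>'\<in>{0, 1}.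
      L x (w (Suc k)) \<alpha> (\<delta> (Suc k)) \<alpha>' (\<beta> (Suc k)) * B_part x w k \<alpha>' \<delta> \<beta>)"
    by (intro poly_fun_deg_sum poly_fun_deg_mult poly_fun_deg_L Suc)
  then show ?case by simp
qed simp

lemma poly_fun_B_act:
  assumes "poly_fun U" "\<And>i. poly_fun (\<lambda>s. W s i)" "\<And>\<beta>. poly_fun (\<lambda>s. \<Psi> s \<beta>)"
  shows "poly_fun (\<lambda>s. B_act N (U s) (W s) (\<Psi> s) \<delta>)"
  unfolding Bop_def Bel_def by (intro poly_fun_sum poly_fun_mult poly_fun_B_part assms)

lemma poly_fun_Z:
  assumes "\<And>j. poly_fun (\<lambda>s. U s j)" "\<And>i. poly_fun (\<lambda>s. W s i)"
  shows "poly_fun (\<lambda>s. Z N (U s) (W s))"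
proof -
  have "poly_fun (\<lambda>s. B_chain N (U s) (W s) js (Omega N) \<delta>)" for js \<delta>
  proof (induction js arbitrary: \<delta>)
    case (Cons j js)
    then show ?case
      unfolding foldr_Cons o_apply by (intro poly_fun_B_act assms)
  qed simp
  then show ?thesis unfolding Z_eq_B_chain .
qed

lemma poly_fun_deg_Z_last: "poly_fun_deg (Suc n) (\<lambda>x. Z (Suc n) (u(Suc n := x)) w)"
proof -
  have "poly_fun_deg (Suc n) (\<lambda>x. B_act (Suc n) x w (Omega (Suc n)) \<beta>)" for \<beta>
  proof -
    have "poly_fun_deg (Suc n + 0) (\<lambda>x. \<Sum>\<gamma>\<in>configs (Suc n).
        B_elem (Suc n) x w \<beta> \<gamma> * Omega (Suc n) \<gamma>)"
      unfolding Bel_def by (intro poly_fun_deg_sum poly_fun_deg_mult poly_fun_deg_B_part poly_fun_deg_const)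
    then show ?thesis unfolding Bop_def by simp
  qed
  then have "poly_fun_deg (Suc n) (\<lambda>x.
      B_chain (Suc n) u w js (B_act (Suc n) x w (Omega (Suc n))) \<delta>)" for js \<delta>
  proof (induction js arbitrary: \<delta>)
    case (Cons j js)
    have "poly_fun_deg (0 + Suc n) (\<lambda>x. \<Sum>\<beta>\<in>configs (Suc n). B_elem (Suc n) (u j) w \<delta> \<beta> *
        B_chain (Suc n) u w js (B_act (Suc n) x w (Omega (Suc n))) \<beta>)"
      by (intro poly_fun_deg_sum poly_fun_deg_mult poly_fun_deg_const Cons)
    then show ?case unfolding foldr_Cons o_apply Bop_def by simp
  qed simp
  moreover have "B_chain (Suc n) (u(Suc n := x)) w [1..<Suc n] = B_chain (Suc n) u w [1..<Suc n]" for x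
    by (intro ext foldr_cong) auto
  ultimately show ?thesis
    unfolding Z_Suc_unfold by simp
qed

end

context integrable_six_vertex
begin

lemma Z_swap_adjacent:
  assumes k: "1 \<le> k" "Suc k \<le> N"
  shows "Z N u (w \<circ> Transposition.transpose k (Suc k)) = Z N u w"
proof -
  define D where "D s = Z N u (w(k := s)) - Z N u (w(k := w (Suc k), Suc k := s))" for s
  have "poly_fun D"
    unfolding D_def by (intro poly_fun_diff poly_fun_Z) (auto simp: fun_upd_def intro!: poly_fun_if)
  moreover have "D s = 0" if "s \<noteq> t * w (Suc k)" for s
  proof -
    have "Z N u (w(k := s)) = Z N u ((w(k := s))(k := w (Suc k), Suc k := s))"
      using Z_swap_adjacent_generic[OF k, of "w(k := s)" u] that by simp
    also have "(w(k := s))(k := w (Suc k), Suc k := s) = w(k := w (Suc k), Suc k := s)"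
      by (simp add: fun_eq_iff)
    finally show ?thesis unfolding D_def by (simp only: diff_self)
  qed
  then have "\<forall>\<^sub>F s in cofinite. D s = 0"
    by (auto simp: eventually_cofinite intro: finite_subset[of _ "{t * w (Suc k)}"])
  ultimately have "D (w k) = 0"
    by (rule poly_fun_eq_0_if_eventually)
  moreover have "w(k := w (Suc k), Suc k := w k) = w \<circ> Transposition.transpose k (Suc k)"
    by (auto simp: fun_eq_iff Transposition.transpose_def)
  ultimately show ?thesis unfolding D_def by simp
qed

end

context six_vertex
begin

section \<open>The determinant side\<close>

definition den :: "(nat \<Rightarrow> complex) \<Rightarrow> (nat \<Rightarrow> complex) \<Rightarrow> nat \<Rightarrow> nat \<Rightarrow> complex" where
  "den u w j k = (a * u j + b * w k) * (e * u j + f * w k)"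

text \<open>The matrix \<open>(1 / den u w j k)\<close> of the theorem, with row \<open>j\<close> multiplied by
  \<open>\<Prod>\<^sub>k den u w j k\<close> so that its entries are polynomials (indices shifted to start at \<open>0\<close>).\<close>

definition cleared_matrix :: "nat \<Rightarrow> (nat \<Rightarrow> complex) \<Rightarrow> (nat \<Rightarrow> complex) \<Rightarrow> complex mat" where
  "cleared_matrix n u w = mat n n (\<lambda>(j, k). \<Prod>k'\<in>{1..n} - {Suc k}. den u w (Suc j) k')"

definition izergin :: "nat \<Rightarrow> (nat \<Rightarrow> complex) \<Rightarrow> (nat \<Rightarrow> complex) \<Rightarrow> complex" where
  "izergin n u w = (\<Prod>j=1..n. (1 - t) * c * u j) * det (cleared_matrix n u w)"

lemma det_cleared_matrix:
  "det (cleared_matrix n u w) = (\<Sum>p\<in>{p. p permutes {0..<n}}. signof p *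
      (\<Prod>i=0..<n. \<Prod>k'\<in>{1..n} - {Suc (p i)}. den u w (Suc i) k'))"
  unfolding cleared_matrix_def
  by (subst det_def'[of _ n]) (auto intro!: sum.cong prod.cong simp: permutes_in_image)

lemma izergin_last_zero: "u (Suc n) = 0 \<Longrightarrow> izergin (Suc n) u w = 0"
  unfolding izergin_def by (simp add: prod.nat_ivl_Suc')

lemma izergin_eq_rows:
  assumes "1 \<le> j" "j \<le> n" "u (Suc n) = u j"
  shows "izergin (Suc n) u w = 0"
proof -
  have "det (cleared_matrix (Suc n) u w) = 0"
  proof (rule det_identical_rows[of _ "Suc n" "j - 1" n])
    show "row (cleared_matrix (Suc n) u w) (j - 1) = row (cleared_matrix (Suc n) u w) n"
      using assms by (intro eq_vecI) (auto simp: cleared_matrix_def den_def)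
  qed (use assms in \<open>auto simp: cleared_matrix_def\<close>)
  then show ?thesis unfolding izergin_def by simp
qed

lemma cleared_matrix_swap_adjacent:
  assumes "1 \<le> k" "Suc k \<le> n"
  shows "cleared_matrix n u (w \<circ> Transposition.transpose k (Suc k)) =
    swapcols (k - 1) k (cleared_matrix n u w)"
proof (rule eq_matI)
  let ?\<tau> = "Transposition.transpose k (Suc k)"
  fix i j assume "i < dim_row (swapcols (k - 1) k (cleared_matrix n u w))"
    "j < dim_col (swapcols (k - 1) k (cleared_matrix n u w))"
  then have ij: "i < n" "j < n" unfolding cleared_matrix_def by auto
  have "cleared_matrix n u (w \<circ> ?\<tau>) $$ (i, j) = (\<Prod>k'\<in>{1..n} - {Suc j}. den u w (Suc i) (?\<tau> k'))"
    unfolding cleared_matrix_def using ij by (simp add: den_def)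
  also have "\<dots> = (\<Prod>k'\<in>?\<tau> ` ({1..n} - {Suc j}). den u w (Suc i) k')"
    by (subst prod.reindex) (auto simp: o_def)
  also have "?\<tau> ` ({1..n} - {Suc j}) = {1..n} - {?\<tau> (Suc j)}"
    using assms by (simp add: image_set_diff inj_transpose)
  also have "(\<Prod>k'\<in>{1..n} - {?\<tau> (Suc j)}. den u w (Suc i) k') = swapcols (k - 1) k (cleared_matrix n u w) $$ (i, j)"
    using ij assms unfolding cleared_matrix_def by (auto simp: Transposition.transpose_def)
  finally show "cleared_matrix n u (w \<circ> ?\<tau>) $$ (i, j) = swapcols (k - 1) k (cleared_matrix n u w) $$ (i, j)" .
qed (auto simp: cleared_matrix_def)

lemma izergin_swap_adjacent:
  assumes "1 \<le> k" "Suc k \<le> n"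
  shows "izergin n u (w \<circ> Transposition.transpose k (Suc k)) = - izergin n u w"
proof -
  have "det (cleared_matrix n u (w \<circ> Transposition.transpose k (Suc k))) = - det (cleared_matrix n u w)"
    unfolding cleared_matrix_swap_adjacent[OF assms]
    by (rule det_swapcols[of "k - 1" n k]) (use assms in \<open>auto simp: cleared_matrix_def\<close>)
  then show ?thesis unfolding izergin_def by simp
qed

lemma cofactor_cleared_matrix:
  "mat_delete (cleared_matrix (Suc n) u w) n n =
    mat n n (\<lambda>(i, j). den u w (Suc i) (Suc n) * (\<Prod>k'\<in>{1..n} - {Suc j}. den u w (Suc i) k'))"
proof (rule eq_matI)
  fix i j assume "i < dim_row (mat n n (\<lambda>(i, j). den u w (Suc i) (Suc n) *
      (\<Prod>k'\<in>{1..n} - {Suc j}. den u w (Suc i) k')))"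
    "j < dim_col (mat n n (\<lambda>(i, j). den u w (Suc i) (Suc n) *
      (\<Prod>k'\<in>{1..n} - {Suc j}. den u w (Suc i) k')))"
  then have ij: "i < n" "j < n" by auto
  then have "{1..Suc n} - {Suc j} = insert (Suc n) ({1..n} - {Suc j})" by auto
  then show "mat_delete (cleared_matrix (Suc n) u w) n n $$ (i, j) =
      mat n n (\<lambda>(i, j). den u w (Suc i) (Suc n) * (\<Prod>k'\<in>{1..n} - {Suc j}. den u w (Suc i) k')) $$ (i, j)"
    using ij unfolding mat_delete_def cleared_matrix_def by simp
qed (auto simp: mat_delete_def cleared_matrix_def)

text \<open>At a root of \<open>den u w (n+1) (n+1)\<close> the last row of the cleared matrix has a single nonzero
  entry, so Laplace expansion gives the same recursion as \<open>Z_reduction\<close>.\<close>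

lemma izergin_reduction:
  assumes "a * u (Suc n) + b * w (Suc n) = 0"
  shows "izergin (Suc n) u w = izergin n u w * ((1 - t) * c * u (Suc n)) *
     (\<Prod>k=1..n. den u w (Suc n) k) * (\<Prod>j=1..n. den u w j (Suc n))"
proof -
  let ?M = "cleared_matrix (Suc n) u w"
  have M: "?M \<in> carrier_mat (Suc n) (Suc n)" unfolding cleared_matrix_def by simp
  have "den u w (Suc n) (Suc n) = 0" using assms by (simp add: den_def)
  then have last_row: "?M $$ (n, j) = 0" if "j < n" for j
    unfolding cleared_matrix_def using that by (auto intro!: prod_zero bexI[of _ "Suc n"])
  have "{1..Suc n} - {Suc n} = {1..n}" by auto
  then have corner: "?M $$ (n, n) = (\<Prod>k=1..n. den u w (Suc n) k)"
    unfolding cleared_matrix_def by simp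
  have shift: "(\<Prod>i<n. den u w (Suc i) (Suc n)) = (\<Prod>j=1..n. den u w j (Suc n))"
    by (simp add: prod.atLeast1_atMost_eq lessThan_atLeast0 prod.shift_bounds_cl_Suc_ivl)
  have "det ?M = (\<Sum>j<Suc n. ?M $$ (n, j) * cofactor ?M n j)"
    by (rule laplace_expansion_row[OF M]) simp
  also have "\<dots> = ?M $$ (n, n) * det (mat_delete ?M n n)"
    using last_row by (simp add: lessThan_Suc cofactor_def)
  also have "\<dots> = (\<Prod>k=1..n. den u w (Suc n) k) * ((\<Prod>j=1..n. den u w j (Suc n)) * det (cleared_matrix n u w))"
    unfolding corner cofactor_cleared_matrix det_mat_scale_rows shift
    by (simp add: cleared_matrix_def case_prod_unfold)
  finally show ?thesis
    unfolding izergin_def by (simp add: prod.nat_ivl_Suc' mult_ac)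
qed

lemma det_cleared_matrix_eq:
  assumes "\<And>j k. j \<in> {1..n} \<Longrightarrow> k \<in> {1..n} \<Longrightarrow> den u w j k \<noteq> 0"
  shows "det (cleared_matrix n u w) =
    (\<Prod>j=1..n. \<Prod>k=1..n. den u w j k) * det (mat n n (\<lambda>(j, k). 1 / den u w (Suc j) (Suc k)))"
proof -
  have "(\<Prod>k'\<in>{1..n} - {Suc k}. den u w (Suc j) k') =
      (\<Prod>k'=1..n. den u w (Suc j) k') * (1 / den u w (Suc j) (Suc k))" if "j < n" "k < n" for j k
  proof -
    have "(\<Prod>k'=1..n. den u w (Suc j) k') =
        den u w (Suc j) (Suc k) * (\<Prod>k'\<in>{1..n} - {Suc k}. den u w (Suc j) k')"
      using that by (intro prod.remove) auto
    then show ?thesis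
      using that assms[of "Suc j" "Suc k"] by simp
  qed
  then have "cleared_matrix n u w =
      mat n n (\<lambda>(j, k). (\<Prod>k'=1..n. den u w (Suc j) k') * (1 / den u w (Suc j) (Suc k)))"
    unfolding cleared_matrix_def by (intro eq_matI) auto
  then have "det (cleared_matrix n u w) = (\<Prod>j<n. \<Prod>k'=1..n. den u w (Suc j) k') *
      det (mat n n (\<lambda>(j, k). 1 / den u w (Suc j) (Suc k)))"
    by (simp only: det_mat_scale_rows)
  moreover have "(\<Prod>j<n. \<Prod>k'=1..n. den u w (Suc j) k') = (\<Prod>j=1..n. \<Prod>k=1..n. den u w j k)"
    by (simp add: prod.atLeast1_atMost_eq lessThan_atLeast0)
  ultimately show ?thesis by simp
qed

lemma poly_fun_izergin:
  assumes "\<And>j. poly_fun (\<lambda>s. U s j)" "\<And>k. poly_fun (\<lambda>s. W s k)"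
  shows "poly_fun (\<lambda>s. izergin N (U s) (W s))"
  unfolding izergin_def det_cleared_matrix den_def
  by (intro poly_fun_mult poly_fun_sum poly_fun_prod poly_fun_add poly_fun_const assms)

lemma poly_fun_deg_izergin_last: "poly_fun_deg (2 * n + 1) (\<lambda>x. izergin (Suc n) (u(Suc n := x)) w)"
proof -
  let ?u = "\<lambda>x. u(Suc n := x)"
  have den_last: "poly_fun_deg 2 (\<lambda>x. den (?u x) w (Suc n) k)" for k
    using poly_fun_deg_mult[OF poly_fun_deg_linear poly_fun_deg_linear, of "b * w k" a "f * w k" e]
    by (simp add: den_def add.commute numeral_2_eq_2)
  define deg where "deg i = (if i = n then 2 * n else 0)" for i
  have row: "poly_fun_deg (deg i) (\<lambda>x. \<Prod>k'\<in>{1..Suc n} - {Suc (p i)}. den (?u x) w (Suc i) k')"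
    if "p permutes {0..<Suc n}" "i \<in> {0..<Suc n}" for p i
  proof (cases "i = n")
    case True
    have "p i < Suc n" using that by (simp add: permutes_in_image)
    then have "card ({1..Suc n} - {Suc (p i)}) = n" by simp
    moreover have "poly_fun_deg (\<Sum>k'\<in>{1..Suc n} - {Suc (p i)}. 2)
        (\<lambda>x. \<Prod>k'\<in>{1..Suc n} - {Suc (p i)}. den (?u x) w (Suc n) k')"
      by (intro poly_fun_deg_prod den_last)
    ultimately show ?thesis using True by (simp add: deg_def mult.commute)
  next
    case False
    then have "den (?u x) w (Suc i) k' = den u w (Suc i) k'" for x k'
      by (simp add: den_def)
    then show ?thesis by simp
  qed
  have "poly_fun_deg (0 + (\<Sum>i=0..<Suc n. deg i)) (\<lambda>x. det (cleared_matrix (Suc n) (?u x) w))"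
    unfolding det_cleared_matrix by (intro poly_fun_deg_sum poly_fun_deg_mult poly_fun_deg_const poly_fun_deg_prod row) auto
  moreover have "(\<Sum>i=0..<Suc n. deg i) = 2 * n" unfolding deg_def by simp
  ultimately have "poly_fun_deg ((0 + 1) + 2 * n) (\<lambda>x. (\<Prod>j=1..n. (1 - t) * c * u j) * ((1 - t) * c * x) *
      det (cleared_matrix (Suc n) (?u x) w))"
    using poly_fun_deg_linear[of 0 "(1 - t) * c"] by (intro poly_fun_deg_mult) auto
  moreover have "(\<Prod>j=1..n. (1 - t) * c * ?u x j) = (\<Prod>j=1..n. (1 - t) * c * u j)" for x
    by (intro prod.cong) auto
  ultimately show ?thesis unfolding izergin_def by (simp add: prod.nat_ivl_Suc')
qed

section \<open>Induction on the size\<close>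

definition Z_normalized :: "nat \<Rightarrow> (nat \<Rightarrow> complex) \<Rightarrow> (nat \<Rightarrow> complex) \<Rightarrow> complex" where
  "Z_normalized n u w =
    Z n u w * (c * d) ^ (n * (n - 1) div 2) * vandermonde_prod n (\<lambda>j. - u j) * vandermonde_prod n w"

lemma Z_normalized_last_zero: "u (Suc n) = 0 \<Longrightarrow> Z_normalized (Suc n) u w = 0"
  unfolding Z_normalized_def by (simp add: Z_last_zero)

lemma Z_normalized_eq_rows:
  assumes "1 \<le> j" "j \<le> n" "u (Suc n) = u j"
  shows "Z_normalized (Suc n) u w = 0"
proof -
  have "(\<Prod>j=1..n. - u (Suc n) - - u j) = 0"
    using assms by (intro prod_zero) (auto intro!: bexI[of _ j])
  then show ?thesis unfolding Z_normalized_def vandermonde_prod_Suc by simp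
qed

lemma Z_normalized_reduction:
  assumes "a * u (Suc n) + b * w (Suc n) = 0"
  shows "Z_normalized (Suc n) u w = Z_normalized n u w * ((1 - t) * c * u (Suc n)) *
     ((\<Prod>i=1..n. e * u (Suc n) + f * w i) * (\<Prod>j=1..n. a * t * u j + b * w (Suc n))
      * (c * d) ^ n * (\<Prod>j=1..n. u j - u (Suc n)) * (\<Prod>j=1..n. w (Suc n) - w j))"
proof -
  have "Suc n * (Suc n - 1) div 2 = n * (n - 1) div 2 + n"
    by (cases n) (simp_all add: algebra_simps)
  moreover have "(\<Prod>j=1..n. - u (Suc n) - - u j) = (\<Prod>j=1..n. u j - u (Suc n))"
    by simp
  ultimately show ?thesis
    unfolding Z_normalized_def vandermonde_prod_Suc Z_reduction[where u = u and n = n and w = w, OF assms]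
    by (simp add: power_add mult_ac)
qed

lemma poly_fun_Z_normalized:
  assumes "\<And>j. poly_fun (\<lambda>s. U s j)" "\<And>k. poly_fun (\<lambda>s. W s k)"
  shows "poly_fun (\<lambda>s. Z_normalized N (U s) (W s))"
  unfolding Z_normalized_def vandermonde_prod_def
  by (intro poly_fun_mult poly_fun_Z poly_fun_const poly_fun_prod poly_fun_diff poly_fun_uminus assms)

lemma poly_fun_deg_Z_normalized_last:
  "poly_fun_deg (2 * n + 1) (\<lambda>x. Z_normalized (Suc n) (u(Suc n := x)) w)"
proof -
  have "poly_fun_deg n (\<lambda>x. \<Prod>j=1..n. - x - - u j)"
    using poly_fun_deg_prod[of "{1..n}" "\<lambda>_. 1" "\<lambda>j x. - x - - u j"]
      poly_fun_deg_linear[of "u _" "- 1"] by simp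
  then have "poly_fun_deg ((Suc n + 0) + (0 + n) + 0) (\<lambda>x. Z (Suc n) (u(Suc n := x)) w *
      (c * d) ^ (Suc n * (Suc n - 1) div 2) * (vandermonde_prod n (\<lambda>j. - u j) *
      (\<Prod>j=1..n. - x - - u j)) * vandermonde_prod (Suc n) w)"
    by (intro poly_fun_deg_mult poly_fun_deg_Z_last poly_fun_deg_const)
  moreover have "vandermonde_prod n (\<lambda>j. - (u(Suc n := x)) j) = vandermonde_prod n (\<lambda>j. - u j)" for x
    unfolding vandermonde_prod_def by (intro prod.cong) auto
  moreover have "(\<Prod>j=1..n. - x - - (u(Suc n := x)) j) = (\<Prod>j=1..n. - x - - u j)" for x
    by (intro prod.cong) auto
  ultimately show ?thesis
    unfolding Z_normalized_def vandermonde_prod_Suc[of n "\<lambda>j. - _ j"]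
    by (auto elim!: poly_fun_deg_mono simp: mult_ac)
qed

end

context integrable_six_vertex
begin

lemma Z_normalized_swap_adjacent:
  assumes "1 \<le> k" "Suc k \<le> n"
  shows "Z_normalized n u (w \<circ> Transposition.transpose k (Suc k)) = - Z_normalized n u w"
  unfolding Z_normalized_def Z_swap_adjacent[OF assms] vandermonde_prod_swap_adjacent[OF assms]
  by simp

lemma reduction_factor_identity:
  assumes "a * x + b * y = 0"
  shows "(e * x + f * w') * (a * t * u' + b * y) * (c * d) * (u' - x) * (y - w') =
    ((a * x + b * w') * (e * x + f * w')) * ((a * u' + b * y) * (e * u' + f * y))"
proof -
  have e: "e = - t * c * d / b" and f: "f = - c * d / a" and y: "y = - a * x / b"
    using assms e_eq f_eq a_nonzero b_nonzero by (auto simp: field_simps eq_neg_iff_add_eq_0)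
  show ?thesis
    unfolding e f y using a_nonzero b_nonzero by (simp add: field_simps)
qed

lemma reduction_factors_agree:
  assumes "a * u (Suc n) + b * w (Suc n) = 0"
  shows "(\<Prod>i=1..n. e * u (Suc n) + f * w i) * (\<Prod>j=1..n. a * t * u j + b * w (Suc n))
      * (c * d) ^ n * (\<Prod>j=1..n. u j - u (Suc n)) * (\<Prod>j=1..n. w (Suc n) - w j)
    = (\<Prod>k=1..n. den u w (Suc n) k) * (\<Prod>j=1..n. den u w j (Suc n))"
proof -
  have "(\<Prod>i=1..n. e * u (Suc n) + f * w i) * (\<Prod>j=1..n. a * t * u j + b * w (Suc n))
      * (c * d) ^ n * (\<Prod>j=1..n. u j - u (Suc n)) * (\<Prod>j=1..n. w (Suc n) - w j)
     = (\<Prod>i=1..n. (e * u (Suc n) + f * w i) * (a * t * u i + b * w (Suc n)) * (c * d)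
         * (u i - u (Suc n)) * (w (Suc n) - w i))"
    by (simp add: prod.distrib)
  also have "\<dots> = (\<Prod>i=1..n. den u w (Suc n) i * den u w i (Suc n))"
    unfolding den_def by (intro prod.cong refl reduction_factor_identity assms)
  finally show ?thesis by (simp add: prod.distrib)
qed

lemma Z_normalized_eq_izergin_at_root:
  assumes "\<And>u w. Z_normalized n u w = izergin n u w"
    and "a * u (Suc n) + b * w (Suc n) = 0"
  shows "Z_normalized (Suc n) u w = izergin (Suc n) u w"
  unfolding Z_normalized_reduction[where u = u and n = n and w = w, OF assms(2)]
    izergin_reduction[where u = u and n = n and w = w, OF assms(2)]
    reduction_factors_agree[where u = u and n = n and w = w, OF assms(2)] assms(1)
  by (simp add: mult_ac)

lemma Z_normalized_eq_izergin_at_roots: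
  assumes "\<And>u w. Z_normalized n u w = izergin n u w"
    and "1 \<le> k" "k \<le> Suc n" "a * u (Suc n) + b * w k = 0"
  shows "Z_normalized (Suc n) u w = izergin (Suc n) u w"
  using assms(3,4)
proof (induction k arbitrary: w rule: inc_induct)
  case base
  then show ?case by (rule Z_normalized_eq_izergin_at_root[OF assms(1)])
next
  case (step m)
  let ?\<tau> = "Transposition.transpose m (Suc m)"
  have m: "1 \<le> m" "Suc m \<le> Suc n" using assms(2) step.hyps by auto
  have "a * u (Suc n) + b * (w \<circ> ?\<tau>) (Suc m) = 0"
    using step.prems by simp
  then have "Z_normalized (Suc n) u (w \<circ> ?\<tau>) = izergin (Suc n) u (w \<circ> ?\<tau>)"
    by (rule step.IH)
  then show ?case
    unfolding Z_normalized_swap_adjacent[OF m] izergin_swap_adjacent[OF m] by simp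
qed

definition interpolation_nodes :: "nat \<Rightarrow> (nat \<Rightarrow> complex) \<Rightarrow> (nat \<Rightarrow> complex) \<Rightarrow> complex set" where
  "interpolation_nodes n u w = u ` {1..n} \<union> {0} \<union> (\<lambda>k. - b * w k / a) ` {1..Suc n}"

lemma card_interpolation_nodes:
  assumes "\<And>i j. i \<in> {1..n} \<Longrightarrow> j \<in> {1..n} - {i} \<Longrightarrow> u i \<noteq> u j"
    and "\<And>j. j \<in> {1..n} \<Longrightarrow> u j \<noteq> 0"
    and "\<And>i j. i \<in> {1..Suc n} \<Longrightarrow> j \<in> {1..Suc n} - {i} \<Longrightarrow> w i \<noteq> w j"
    and "\<And>k. k \<in> {1..Suc n} \<Longrightarrow> w k \<noteq> 0"
    and "\<And>j k. j \<in> {1..n} \<Longrightarrow> k \<in> {1..Suc n} \<Longrightarrow> a * u j + b * w k \<noteq> 0"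
  shows "card (interpolation_nodes n u w) = 2 * n + 2"
proof -
  let ?root = "\<lambda>k. - b * w k / a"
  have "inj_on u {1..n}"
    using assms(1) unfolding inj_on_def by blast
  then have card_u: "card (u ` {1..n} \<union> {0}) = n + 1"
    using assms(2) by (subst card_Un_disjoint) (auto simp: card_image)
  have "inj_on w {1..Suc n}"
    using assms(3) unfolding inj_on_def by blast
  then have "inj_on ?root {1..Suc n}"
    using a_nonzero b_nonzero by (auto simp: inj_on_def field_simps)
  moreover have "(u ` {1..n} \<union> {0}) \<inter> ?root ` {1..Suc n} = {}"
    using assms(4,5) a_nonzero b_nonzero by (auto simp: field_simps eq_neg_iff_add_eq_0)
  ultimately show ?thesis
    unfolding interpolation_nodes_def using card_u by (subst card_Un_disjoint) (auto simp: card_image)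
qed

text \<open>Both sides are polynomials of degree \<open>\<le> 2n + 1\<close> in \<open>u\<^sub>n\<^sub>+\<^sub>1\<close> that agree at the nodes.\<close>

lemma Z_normalized_eq_izergin_generic:
  assumes IH: "\<And>u w. Z_normalized n u w = izergin n u w"
    and card: "card (interpolation_nodes n u w) = 2 * n + 2"
  shows "Z_normalized (Suc n) u w = izergin (Suc n) u w"
proof -
  define P where "P = (\<lambda>x. Z_normalized (Suc n) (u(Suc n := x)) w - izergin (Suc n) (u(Suc n := x)) w)"
  have zeros: "P x = 0" if x: "x \<in> interpolation_nodes n u w" for x
  proof -
    consider (node) j where "j \<in> {1..n}" "x = u j" | (zero) "x = 0"
      | (root) k where "k \<in> {1..Suc n}" "x = - b * w k / a"
      using x unfolding interpolation_nodes_def by blast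
    then show ?thesis
    proof cases
      case node
      then have "1 \<le> j" "j \<le> n" "(u(Suc n := x)) (Suc n) = (u(Suc n := x)) j"
        by auto
      then show ?thesis
        unfolding P_def by (simp only: Z_normalized_eq_rows izergin_eq_rows diff_self)
    next
      case zero
      then show ?thesis
        unfolding P_def by (simp add: Z_normalized_last_zero izergin_last_zero)
    next
      case root
      then have "a * (u(Suc n := x)) (Suc n) + b * w k = 0"
        using a_nonzero by (simp add: field_simps)
      then show ?thesis
        unfolding P_def
        using Z_normalized_eq_izergin_at_roots[where u = "u(Suc n := x)" and w = w and k = k, OF IH] root
        by simp
    qed
  qed
  have "poly_fun_deg (2 * n + 1) P"
    unfolding P_def
    using poly_fun_deg_diff[OF poly_fun_deg_Z_normalized_last poly_fun_deg_izergin_last] .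
  then have "P (u (Suc n)) = 0"
    by (rule poly_fun_deg_eq_0[where S = "interpolation_nodes n u w"]) (use card zeros in auto)
  then show ?thesis unfolding P_def by simp
qed

text \<open>Genericity is reached by moving along the line \<open>u\<^sub>j + j s\<close>, \<open>w\<^sub>k + R k s\<close>: for a suitable slope
  \<open>R\<close> the nodes are distinct for all but finitely many \<open>s\<close>, and both sides are polynomials in \<open>s\<close>.\<close>

lemma Z_normalized_eq_izergin_Suc:
  assumes IH: "\<And>u w. Z_normalized n u w = izergin n u w"
  shows "Z_normalized (Suc n) u w = izergin (Suc n) u w"
proof -
  have "finite (insert 0 ((\<lambda>(j, k). - a * of_nat j / (b * of_nat k)) ` ({1..n} \<times> {1..Suc n})))"
    by simp
  then obtain R :: complex
    where R: "R \<notin> insert 0 ((\<lambda>(j, k). - a * of_nat j / (b * of_nat k)) ` ({1..n} \<times> {1..Suc n}))"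
    using ex_new_if_finite[OF infinite_UNIV_char_0] by blast
  then have R_nonzero: "R \<noteq> 0" by simp
  have R_generic: "a * of_nat j + b * (R * of_nat k) \<noteq> 0" if "j \<in> {1..n}" "k \<in> {1..Suc n}" for j k
  proof
    assume "a * of_nat j + b * (R * of_nat k) = 0"
    then have "R = - a * of_nat j / (b * of_nat k)"
      using b_nonzero that by (auto simp: field_simps eq_neg_iff_add_eq_0)
    then show False
      using R that by auto
  qed
  define U where "U s j = u j + of_nat j * s" for s :: complex and j
  define W where "W s k = w k + R * of_nat k * s" for s :: complex and k
  let ?Q = "\<lambda>s. Z_normalized (Suc n) (U s) (W s) - izergin (Suc n) (U s) (W s)"
  have "poly_fun ?Q"
    unfolding U_def W_def
    by (intro poly_fun_diff poly_fun_Z_normalized poly_fun_izergin poly_fun_linear)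
  moreover have "\<forall>\<^sub>F s in cofinite. card (interpolation_nodes n (U s) (W s)) = 2 * n + 2"
  proof -
    have "\<forall>\<^sub>F s in cofinite. \<forall>i\<in>{1..n}. \<forall>j\<in>{1..n} - {i}. U s i \<noteq> U s j"
      unfolding U_def
      by (intro eventually_ball_finite ballI eventually_cofinite_affine_neq finite_atLeastAtMost finite_Diff) auto
    moreover have "\<forall>\<^sub>F s in cofinite. \<forall>j\<in>{1..n}. U s j \<noteq> 0 + 0 * s"
      unfolding U_def by (intro eventually_ball_finite ballI eventually_cofinite_affine_neq finite_atLeastAtMost) auto
    moreover have "\<forall>\<^sub>F s in cofinite. \<forall>i\<in>{1..Suc n}. \<forall>j\<in>{1..Suc n} - {i}. W s i \<noteq> W s j"
      unfolding W_def using R_nonzero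
      by (intro eventually_ball_finite ballI eventually_cofinite_affine_neq finite_atLeastAtMost finite_Diff) auto
    moreover have "\<forall>\<^sub>F s in cofinite. \<forall>k\<in>{1..Suc n}. W s k \<noteq> 0 + 0 * s"
      unfolding W_def using R_nonzero
      by (intro eventually_ball_finite ballI eventually_cofinite_affine_neq finite_atLeastAtMost) auto
    moreover have "\<forall>\<^sub>F s in cofinite. \<forall>j\<in>{1..n}. \<forall>k\<in>{1..Suc n}.
        (a * u j + b * w k) + (a * of_nat j + b * (R * of_nat k)) * s \<noteq> 0 + 0 * s"
      using R_generic
      by (intro eventually_ball_finite ballI eventually_cofinite_affine_neq finite_atLeastAtMost) auto
    ultimately show ?thesis
    proof eventually_elim
      case (elim s)
      show ?case
      proof (rule card_interpolation_nodes)
        show "a * U s j + b * W s k \<noteq> 0" if "j \<in> {1..n}" "k \<in> {1..Suc n}" for j k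
          using elim(5) that unfolding U_def W_def by (auto simp: algebra_simps)
      qed (use elim in auto)
    qed
  qed
  then have "\<forall>\<^sub>F s in cofinite. ?Q s = 0"
    by eventually_elim (simp add: Z_normalized_eq_izergin_generic[OF IH])
  ultimately have "?Q 0 = 0"
    by (rule poly_fun_eq_0_if_eventually)
  moreover have "U 0 = u" "W 0 = w"
    unfolding U_def W_def by auto
  ultimately show ?thesis by simp
qed

theorem Z_normalized_eq_izergin: "Z_normalized n u w = izergin n u w"
proof (induction n arbitrary: u w)
  case 0
  show ?case
    unfolding Z_normalized_def izergin_def vandermonde_prod_def Zpf_def cleared_matrix_def
    by (simp add: det_def Omega_def)
next
  case (Suc n)
  then show ?case by (rule Z_normalized_eq_izergin_Suc)
qed

end

theorem mainTheorem7:
  fixes t a b c d e f :: complex and N :: nat and u w :: "nat \<Rightarrow> complex"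
  assumes "t \<noteq> 0" "a \<noteq> 0" "b \<noteq> 0" "c \<noteq> 0" "d \<noteq> 0" "e \<noteq> 0" "f \<noteq> 0"
    and "t \<noteq> 1"
    and "c*d + a*f = 0" and "t*c*d + b*e = 0"
    and "N \<ge> 1"
    and "\<And>j k. 1 \<le> j \<Longrightarrow> j < k \<Longrightarrow> k \<le> N \<Longrightarrow> u j \<noteq> u k"
    and "\<And>j k. 1 \<le> j \<Longrightarrow> j < k \<Longrightarrow> k \<le> N \<Longrightarrow> w j \<noteq> w k"
    and "\<And>j k. j \<in> {1..N} \<Longrightarrow> k \<in> {1..N} \<Longrightarrow> (a * u j + b * w k) * (e * u j + f * w k) \<noteq> 0"
  shows "Zpf t a b c d e f N u w =
    (\<Prod>j=1..N. (1-t)*c*u j) * (\<Prod>j=1..N. \<Prod>k=1..N. (a * u j + b * w k) * (e * u j + f * w k))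
    / ((c*d) ^ (N*(N-1) div 2) * (\<Prod>j=1..N. \<Prod>k\<in>{j<..N}. (u j - u k) * (w k - w j)))
    * det (mat N N (\<lambda>(j,k). 1 / ((a * u (j+1) + b * w (k+1)) * (e * u (j+1) + f * w (k+1)))))"
proof -
  interpret integrable_six_vertex t a b c d e f
    using assms by unfold_locales
  let ?D = "\<Prod>j=1..N. \<Prod>k\<in>{j<..N}. (u j - u k) * (w k - w j)"
  have D: "?D = vandermonde_prod N (\<lambda>j. - u j) * vandermonde_prod N w"
    unfolding vandermonde_prod_def by (simp add: prod.distrib)
  have "(u j - u k) * (w k - w j) \<noteq> 0" if "j \<in> {1..N}" "k \<in> {j<..N}" for j k
    using assms(12,13)[of j k] that by auto
  then have "?D \<noteq> 0"
    by (simp add: prod_zero_iff)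
  moreover have "(c * d) ^ (N * (N - 1) div 2) \<noteq> 0"
    using assms(4,5) by simp
  moreover have "Z N u w * (c * d) ^ (N * (N - 1) div 2) * ?D = izergin N u w"
    using Z_normalized_eq_izergin[of N u w] unfolding Z_normalized_def D by (simp add: mult_ac)
  moreover have "izergin N u w = (\<Prod>j=1..N. (1 - t) * c * u j) * ((\<Prod>j=1..N. \<Prod>k=1..N. den u w j k)
      * det (mat N N (\<lambda>(j, k). 1 / den u w (Suc j) (Suc k))))"
    unfolding izergin_def using assms(14) by (subst det_cleared_matrix_eq) (auto simp: den_def)
  ultimately show ?thesis
    unfolding den_def by (simp add: field_simps)
qed

end
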